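(* In a phase space $Z_2$, the exponential growth rate of an arbitrary solution of the permanent source produced time harmonic perturbation propagation problem (with amplitude in $Z_2$) is equal to zero.
   Context: Fix constants $U_0,c_0,\rho_0>0$, $\omega_f\in\mathbb{R}$, $h$ the Heaviside function. The permanent source produced time harmonic perturbation propagation problem with amplitude $A=(F,G,H,P)$: find $(v_x',v_y',v_z',p')$, zero for $t\le0$, with $\partial_t v_x' + U_0\partial_x v_x' + \frac1{\rho_0}\partial_x p' = h(t)F\sin\omega_f t$, $\partial_t v_y' + U_0\partial_x v_y' + \frac1{\rho_0}\partial_y p' = h(t)G\sin\omega_f t$, $\partial_t v_z' + U_0\partial_x v_z' + \frac1{\rho_0}\partial_z p' = h(t)H\sin\omega_f t$, $\partial_t p' + U_0\partial_xp' + \rho_0c_0^2(\partial_xv_x'+\partial_yv_y'+\partial_zv_z') = h(t)P\sin\omega_f t$. Phase space $Z_2$: fix real constants $k_i,l_i,m_i$ ($i=1,\dots,4$) with $k_1k_2k_3k_4\neq0$ and $\Delta = \frac{c_0\rho_0}{k_3k_4}[r_1(k_2k_3k_4+k_3m_2m_4+k_4l_2l_3) + r_2(k_1k_3k_4+k_3m_1m_4+k_4l_1l_3)]\neq0$, $r_i=\sqrt{k_i^2+l_i^2+m_i^2}$. With $\xi_i=k_ix+l_iy+m_iz$, $Z_2$ is the set of systems $(F,G,H,P)$ of bounded $C^1$ functions on $\mathbb{R}^3$ of the form $F = k_1f_1(\xi_1)+k_2f_2(\xi_2)+\frac{l_3}{k_3}f_3(\xi_3)+\frac{m_4}{k_4}f_4(\xi_4)$,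 $G = l_1f_1(\xi_1)+l_2f_2(\xi_2)-f_3(\xi_3)$, $H = m_1f_1(\xi_1)+m_2f_2(\xi_2)-f_4(\xi_4)$, $P = -c_0\rho_0r_1f_1(\xi_1)+c_0\rho_0r_2f_2(\xi_2)$ with $f_i$ continuously differentiable, normed by the maximum of the sup norms of the components. The exponential growth rate of a solution is $\nu = \max\{\sup_{(x,y,z)}\limsup_{t\to\infty}\frac{\ln|v_x'(x,y,z,t)|}{t},\ \text{same for } v_y',\ v_z',\ p'\}$. *)

theory Defs
  imports "HOL-Analysis.Analysis"
begin

text \<open>Heaviside function (the value at 0 is irrelevant, since sin 0 = 0).\<close>
definition heaviside :: "real \<Rightarrow> real" where
  "heaviside t = (if t \<ge> 0 then 1 else 0)"

definition pdx :: "(real \<Rightarrow> real \<Rightarrow> real \<Rightarrow> real \<Rightarrow> real) \<Rightarrow> real \<Rightarrow> real \<Rightarrow> real \<Rightarrow> real \<Rightarrow> real" where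
  "pdx w x y z t = deriv (\<lambda>s. w s y z t) x"
definition pdy :: "(real \<Rightarrow> real \<Rightarrow> real \<Rightarrow> real \<Rightarrow> real) \<Rightarrow> real \<Rightarrow> real \<Rightarrow> real \<Rightarrow> real \<Rightarrow> real" where
  "pdy w x y z t = deriv (\<lambda>s. w x s z t) y"
definition pdz :: "(real \<Rightarrow> real \<Rightarrow> real \<Rightarrow> real \<Rightarrow> real) \<Rightarrow> real \<Rightarrow> real \<Rightarrow> real \<Rightarrow> real \<Rightarrow> real" where
  "pdz w x y z t = deriv (\<lambda>s. w x y s t) z"
definition pdt :: "(real \<Rightarrow> real \<Rightarrow> real \<Rightarrow> real \<Rightarrow> real) \<Rightarrow> real \<Rightarrow> real \<Rightarrow> real \<Rightarrow> real \<Rightarrow> real" where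
  "pdt w x y z t = deriv (\<lambda>s. w x y z s) t"

definition C1_4 :: "(real \<Rightarrow> real \<Rightarrow> real \<Rightarrow> real \<Rightarrow> real) \<Rightarrow> bool" where
  "C1_4 w \<longleftrightarrow>
     (\<forall>x y z t. (\<lambda>s. w s y z t) differentiable (at x) \<and>
                (\<lambda>s. w x s z t) differentiable (at y) \<and>
                (\<lambda>s. w x y s t) differentiable (at z) \<and>
                (\<lambda>s. w x y z s) differentiable (at t)) \<and>
     continuous_on UNIV (\<lambda>(x,y,z,t). w x y z t) \<and>
     continuous_on UNIV (\<lambda>(x,y,z,t). pdx w x y z t) \<and>
     continuous_on UNIV (\<lambda>(x,y,z,t). pdy w x y z t) \<and>
     continuous_on UNIV (\<lambda>(x,y,z,t). pdz w x y z t) \<and>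
     continuous_on UNIV (\<lambda>(x,y,z,t). pdt w x y z t)"

definition is_solution ::
  "real \<Rightarrow> real \<Rightarrow> real \<Rightarrow> real \<Rightarrow>
   (real \<Rightarrow> real \<Rightarrow> real \<Rightarrow> real) \<Rightarrow> (real \<Rightarrow> real \<Rightarrow> real \<Rightarrow> real) \<Rightarrow>
   (real \<Rightarrow> real \<Rightarrow> real \<Rightarrow> real) \<Rightarrow> (real \<Rightarrow> real \<Rightarrow> real \<Rightarrow> real) \<Rightarrow>
   (real \<Rightarrow> real \<Rightarrow> real \<Rightarrow> real \<Rightarrow> real) \<Rightarrow> (real \<Rightarrow> real \<Rightarrow> real \<Rightarrow> real \<Rightarrow> real) \<Rightarrow>
   (real \<Rightarrow> real \<Rightarrow> real \<Rightarrow> real \<Rightarrow> real) \<Rightarrow> (real \<Rightarrow> real \<Rightarrow> real \<Rightarrow> real \<Rightarrow> real) \<Rightarrow> bool" where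
  "is_solution U0 c0 rho0 omega_f F G H P vx vy vz p \<longleftrightarrow>
     C1_4 vx \<and> C1_4 vy \<and> C1_4 vz \<and> C1_4 p \<and>
     (\<forall>x y z t. t \<le> 0 \<longrightarrow> vx x y z t = 0 \<and> vy x y z t = 0 \<and> vz x y z t = 0 \<and> p x y z t = 0) \<and>
     (\<forall>x y z t.
        pdt vx x y z t + U0 * pdx vx x y z t + (1 / rho0) * pdx p x y z t
          = heaviside t * F x y z * sin (omega_f * t) \<and>
        pdt vy x y z t + U0 * pdx vy x y z t + (1 / rho0) * pdy p x y z t
          = heaviside t * G x y z * sin (omega_f * t) \<and>
        pdt vz x y z t + U0 * pdx vz x y z t + (1 / rho0) * pdz p x y z t
          = heaviside t * H x y z * sin (omega_f * t) \<and>
        pdt p x y z t + U0 * pdx p x y z t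
          + rho0 * c0\<^sup>2 * (pdx vx x y z t + pdy vy x y z t + pdz vz x y z t)
          = heaviside t * P x y z * sin (omega_f * t))"

text \<open>Parameters of Z_2: k, l, m indexed by 1..4.\<close>
definition r_coef :: "(nat \<Rightarrow> real) \<Rightarrow> (nat \<Rightarrow> real) \<Rightarrow> (nat \<Rightarrow> real) \<Rightarrow> nat \<Rightarrow> real" where
  "r_coef k l m i = sqrt ((k i)\<^sup>2 + (l i)\<^sup>2 + (m i)\<^sup>2)"

definition Delta_Z2 :: "real \<Rightarrow> real \<Rightarrow> (nat \<Rightarrow> real) \<Rightarrow> (nat \<Rightarrow> real) \<Rightarrow> (nat \<Rightarrow> real) \<Rightarrow> real" where
  "Delta_Z2 c0 rho0 k l m =
     c0 * rho0 / (k 3 * k 4) *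
       (r_coef k l m 1 * (k 2 * k 3 * k 4 + k 3 * m 2 * m 4 + k 4 * l 2 * l 3)
      + r_coef k l m 2 * (k 1 * k 3 * k 4 + k 3 * m 1 * m 4 + k 4 * l 1 * l 3))"

definition in_Z2 ::
  "real \<Rightarrow> real \<Rightarrow> (nat \<Rightarrow> real) \<Rightarrow> (nat \<Rightarrow> real) \<Rightarrow> (nat \<Rightarrow> real) \<Rightarrow>
   (real \<Rightarrow> real \<Rightarrow> real \<Rightarrow> real) \<Rightarrow> (real \<Rightarrow> real \<Rightarrow> real \<Rightarrow> real) \<Rightarrow>
   (real \<Rightarrow> real \<Rightarrow> real \<Rightarrow> real) \<Rightarrow> (real \<Rightarrow> real \<Rightarrow> real \<Rightarrow> real) \<Rightarrow> bool" where
  "in_Z2 c0 rho0 k l m F G H P \<longleftrightarrow>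
     bounded (range (\<lambda>(x,y,z). F x y z)) \<and> bounded (range (\<lambda>(x,y,z). G x y z)) \<and>
     bounded (range (\<lambda>(x,y,z). H x y z)) \<and> bounded (range (\<lambda>(x,y,z). P x y z)) \<and>
     (\<exists>f :: nat \<Rightarrow> real \<Rightarrow> real.
        (\<forall>i\<in>{1..4}. f i C1_differentiable_on UNIV) \<and>
        (\<forall>x y z.
           let \<xi> = (\<lambda>i. k i * x + l i * y + m i * z) in
           F x y z = k 1 * f 1 (\<xi> 1) + k 2 * f 2 (\<xi> 2) + l 3 / k 3 * f 3 (\<xi> 3) + m 4 / k 4 * f 4 (\<xi> 4) \<and>
           G x y z = l 1 * f 1 (\<xi> 1) + l 2 * f 2 (\<xi> 2) - f 3 (\<xi> 3) \<and>
           H x y z = m 1 * f 1 (\<xi> 1) + m 2 * f 2 (\<xi> 2) - f 4 (\<xi> 4) \<and>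
           P x y z = - c0 * rho0 * r_coef k l m 1 * f 1 (\<xi> 1) + c0 * rho0 * r_coef k l m 2 * f 2 (\<xi> 2)))"

text \<open>Exponential growth rate of one component (extended real; Isabelle's ln 0 = 0).\<close>
definition comp_growth :: "(real \<Rightarrow> real \<Rightarrow> real \<Rightarrow> real \<Rightarrow> real) \<Rightarrow> ereal" where
  "comp_growth w = (SUP q \<in> (UNIV :: (real \<times> real \<times> real) set).
       (case q of (x,y,z) \<Rightarrow> Limsup at_top (\<lambda>t. ereal (ln \<bar>w x y z t\<bar> / t))))"

definition growth_rate ::
  "(real \<Rightarrow> real \<Rightarrow> real \<Rightarrow> real \<Rightarrow> real) \<Rightarrow> (real \<Rightarrow> real \<Rightarrow> real \<Rightarrow> real \<Rightarrow> real) \<Rightarrow>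
   (real \<Rightarrow> real \<Rightarrow> real \<Rightarrow> real \<Rightarrow> real) \<Rightarrow> (real \<Rightarrow> real \<Rightarrow> real \<Rightarrow> real \<Rightarrow> real) \<Rightarrow> ereal" where
  "growth_rate vx vy vz p =
     max (max (comp_growth vx) (comp_growth vy)) (max (comp_growth vz) (comp_growth p))"

end

(* The solution is computed explicitly.  An amplitude in Z_2 is a superposition of four
   plane waves f_i (k_i x + l_i y + m_i z) e_i, where e_i is an eigenvector, with eigenvalue sigma_i, of
   the symbol of the linearised Euler operator in the direction (k_i, l_i, m_i).  Each mode thus
   reduces to the transport equation u_t + sigma_i u_xi = f_i (xi) sin (omega t) with zero data, solved
   by Duhamel's formula: the solution grows at most linearly, and if it tends to 0 at every point it
   vanishes, being periodic in t along characteristics.  The energy method in a shrinking cone shows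
   that the Cauchy problem has only one classical solution, so the given solution is this
   superposition; hence its growth rate is at most 0.  If the rate were negative, every component
   would decay, inverting the Z_2 decomposition (Delta <> 0) every mode would decay and so vanish, and
   the solution would be identically 0, whose rate is 0 because ln 0 = 0. *)

theory Submission
  imports Defs
begin

type_synonym field = "real \<Rightarrow> real \<Rightarrow> real \<Rightarrow> real \<Rightarrow> real"

(* Joint continuity in (x, y, z, t), written with projections so that continuous_intros applies. *)
definition continuous_field :: "field \<Rightarrow> bool" where
  "continuous_field g \<longleftrightarrow>
     continuous_on UNIV (\<lambda>v. g (fst v) (fst (snd v)) (fst (snd (snd v))) (snd (snd (snd v))))"

lemma continuous_field_iff: "continuous_field g \<longleftrightarrow> continuous_on UNIV (\<lambda>(x, y, z, t). g x y z t)"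
  unfolding continuous_field_def by (simp add: case_prod_beta)

lemma continuous_field_const: "continuous_field (\<lambda>x y z t. c)"
  and continuous_field_x: "continuous_field (\<lambda>x y z t. x)"
  and continuous_field_y: "continuous_field (\<lambda>x y z t. y)"
  and continuous_field_z: "continuous_field (\<lambda>x y z t. z)"
  and continuous_field_t: "continuous_field (\<lambda>x y z t. t)"
  unfolding continuous_field_def by (intro continuous_intros)+

lemma continuous_field_add:
    "continuous_field f \<Longrightarrow> continuous_field g \<Longrightarrow> continuous_field (\<lambda>x y z t. f x y z t + g x y z t)"
  and continuous_field_diff:
    "continuous_field f \<Longrightarrow> continuous_field g \<Longrightarrow> continuous_field (\<lambda>x y z t. f x y z t - g x y z t)"
  and continuous_field_mult:
    "continuous_field f \<Longrightarrow> continuous_field g \<Longrightarrow> continuous_field (\<lambda>x y z t. f x y z t * g x y z t)"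
  unfolding continuous_field_def by (intro continuous_intros; assumption)+

lemma continuous_field_divide_const:
  "continuous_field f \<Longrightarrow> continuous_field (\<lambda>x y z t. f x y z t / c)"
  unfolding continuous_field_def divide_inverse by (intro continuous_intros)

lemma continuous_field_power: "continuous_field f \<Longrightarrow> continuous_field (\<lambda>x y z t. f x y z t ^ n)"
  unfolding continuous_field_def by (intro continuous_intros)

lemma continuous_field_compose:
  "continuous_on UNIV h \<Longrightarrow> continuous_field f \<Longrightarrow> continuous_field (\<lambda>x y z t. h (f x y z t))"
  unfolding continuous_field_def by (rule continuous_on_compose2[where t=UNIV]) auto

lemmas continuous_field_intros = continuous_field_const continuous_field_x continuous_field_y
  continuous_field_z continuous_field_t continuous_field_add continuous_field_diff
  continuous_field_mult continuous_field_divide_const continuous_field_power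

lemma continuous_field_slice:
  assumes "continuous_field g"
  shows "continuous_on S (\<lambda>(x, y, z). g x y z t)"
proof -
  have "continuous_on S ((\<lambda>v. g (fst v) (fst (snd v)) (fst (snd (snd v))) (snd (snd (snd v))))
          \<circ> (\<lambda>(x, y, z). (x, y, z, t)))"
    by (rule continuous_on_compose, simp add: case_prod_beta, intro continuous_intros,
        rule continuous_on_subset[OF assms[unfolded continuous_field_def]]) auto
  then show ?thesis by (simp add: o_def case_prod_beta)
qed

lemma continuous_field_time_space:
  assumes "continuous_field g"
  shows "continuous_on S (\<lambda>(t, x, y, z). g x y z t)"
proof -
  have "continuous_on S ((\<lambda>v. g (fst v) (fst (snd v)) (fst (snd (snd v))) (snd (snd (snd v))))
          \<circ> (\<lambda>(t, x, y, z). (x, y, z, t)))"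
    by (rule continuous_on_compose, simp add: case_prod_beta, intro continuous_intros,
        rule continuous_on_subset[OF assms[unfolded continuous_field_def]]) auto
  then show ?thesis by (simp add: o_def case_prod_beta)
qed

definition has_partials :: "field \<Rightarrow> field \<Rightarrow> field \<Rightarrow> field \<Rightarrow> field \<Rightarrow> bool" where
  "has_partials g gx gy gz gt \<longleftrightarrow>
     (\<forall>x y z t. ((\<lambda>s. g s y z t) has_real_derivative gx x y z t) (at x) \<and>
                ((\<lambda>s. g x s z t) has_real_derivative gy x y z t) (at y) \<and>
                ((\<lambda>s. g x y s t) has_real_derivative gz x y z t) (at z) \<and>
                ((\<lambda>s. g x y z s) has_real_derivative gt x y z t) (at t)) \<and>
     continuous_field g \<and> continuous_field gx \<and> continuous_field gy \<and>
     continuous_field gz \<and> continuous_field gt"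

lemma has_partialsD:
  assumes "has_partials g gx gy gz gt"
  shows "((\<lambda>s. g s y z t) has_real_derivative gx x y z t) (at x)"
    and "((\<lambda>s. g x s z t) has_real_derivative gy x y z t) (at y)"
    and "((\<lambda>s. g x y s t) has_real_derivative gz x y z t) (at z)"
    and "((\<lambda>s. g x y z s) has_real_derivative gt x y z t) (at t)"
    and "continuous_field g" "continuous_field gx" "continuous_field gy"
    "continuous_field gz" "continuous_field gt"
  using assms unfolding has_partials_def by blast+

lemma C1_4_iff_has_partials: "C1_4 w \<longleftrightarrow> has_partials w (pdx w) (pdy w) (pdz w) (pdt w)"
  unfolding C1_4_def has_partials_def continuous_field_iff pdx_def pdy_def pdz_def pdt_def
  by (simp add: DERIV_deriv_iff_real_differentiable)

lemma has_partials_C1_4: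
  assumes "has_partials g gx gy gz gt"
  shows "C1_4 g" and "pdx g = gx" "pdy g = gy" "pdz g = gz" "pdt g = gt"
proof -
  show "pdx g = gx" "pdy g = gy" "pdz g = gz" "pdt g = gt"
    using has_partialsD(1-4)[OF assms]
    by (auto simp: pdx_def pdy_def pdz_def pdt_def intro!: ext DERIV_imp_deriv)
  then show "C1_4 g"
    using assms by (simp add: C1_4_iff_has_partials)
qed

lemma has_partials_sum:
  assumes "\<And>i. i \<in> I \<Longrightarrow> has_partials (g i) (gx i) (gy i) (gz i) (gt i)"
  shows "has_partials (\<lambda>x y z t. \<Sum>i\<in>I. g i x y z t)
     (\<lambda>x y z t. \<Sum>i\<in>I. gx i x y z t) (\<lambda>x y z t. \<Sum>i\<in>I. gy i x y z t)
     (\<lambda>x y z t. \<Sum>i\<in>I. gz i x y z t) (\<lambda>x y z t. \<Sum>i\<in>I. gt i x y z t)"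
  using assms unfolding has_partials_def continuous_field_def
  by (auto intro!: DERIV_sum continuous_on_sum)

lemma has_partials_diff:
  assumes "has_partials f fx fy fz ft" "has_partials g gx gy gz gt"
  shows "has_partials (\<lambda>x y z t. f x y z t - g x y z t)
     (\<lambda>x y z t. fx x y z t - gx x y z t) (\<lambda>x y z t. fy x y z t - gy x y z t)
     (\<lambda>x y z t. fz x y z t - gz x y z t) (\<lambda>x y z t. ft x y z t - gt x y z t)"
  using assms unfolding has_partials_def by (auto intro!: derivative_eq_intros continuous_field_diff)

lemma has_partials_cmult:
  assumes "has_partials g gx gy gz gt"
  shows "has_partials (\<lambda>x y z t. a * g x y z t)
     (\<lambda>x y z t. a * gx x y z t) (\<lambda>x y z t. a * gy x y z t)
     (\<lambda>x y z t. a * gz x y z t) (\<lambda>x y z t. a * gt x y z t)"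
  using assms unfolding has_partials_def by (auto intro!: derivative_eq_intros continuous_field_intros)

section \<open>Integrals over cubes and a dissipative balance law\<close>

lemma integral_eq_0_of_antiderivative_vanishing:
  fixes G g :: "real \<Rightarrow> real"
  assumes "\<And>x. (G has_real_derivative g x) (at x)" "a \<le> b" "G a = 0" "G b = 0"
  shows "integral {a..b} g = 0"
proof -
  have "(g has_integral (G b - G a)) {a..b}"
    by (rule fundamental_theorem_of_calculus[OF assms(2)])
       (auto intro: has_field_derivative_at_within assms(1)
         simp: has_real_derivative_iff_has_vector_derivative[symmetric])
  then show ?thesis using assms by (simp add: integral_unique)
qed

abbreviation cube :: "real \<Rightarrow> (real \<times> real \<times> real) set" where
  "cube M \<equiv> cbox (-M, -M, -M) (M, M, M)"

lemma integral_cube_split: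
  fixes g :: "real \<Rightarrow> real \<Rightarrow> real \<Rightarrow> real"
  assumes "continuous_on UNIV (\<lambda>(x, y, z). g x y z)"
  shows "integral (cube M) (\<lambda>(x, y, z). g x y z)
       = integral {-M..M} (\<lambda>x. integral (cbox (-M, -M) (M, M)) (\<lambda>(y, z). g x y z))"
  using integral_prod_continuous[of "-M" "(-M, -M)" M "(M, M)" "\<lambda>(x, y, z). g x y z"]
    continuous_on_subset[OF assms] by (simp add: case_prod_unfold)

lemma integral_square_split:
  fixes h :: "real \<Rightarrow> real \<Rightarrow> real"
  assumes "continuous_on UNIV (\<lambda>(y, z). h y z)"
  shows "integral (cbox (-M, -M) (M, M)) (\<lambda>(y, z). h y z)
       = integral {-M..M} (\<lambda>y. integral {-M..M} (\<lambda>z. h y z))"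
  using integral_prod_continuous[of "-M" "-M" M M "\<lambda>(y, z). h y z"]
    continuous_on_subset[OF assms] by simp

lemma continuous_on_slice_first:
  fixes g :: "real \<Rightarrow> real \<Rightarrow> real \<Rightarrow> real"
  assumes "continuous_on UNIV (\<lambda>(x, y, z). g x y z)"
  shows "continuous_on UNIV (\<lambda>(y, z). g x y z)"
proof -
  have "continuous_on UNIV ((\<lambda>(x, y, z). g x y z) \<circ> (\<lambda>(y, z). (x, y, z)))"
    by (rule continuous_on_compose[OF _ continuous_on_subset[OF assms]])
       (auto intro!: continuous_intros simp: case_prod_unfold)
  then show ?thesis by (simp add: o_def case_prod_unfold)
qed

lemma integral_cube_partial_x_eq_0:
  fixes G g :: "real \<Rightarrow> real \<Rightarrow> real \<Rightarrow> real"
  assumes der: "\<And>x y z. ((\<lambda>s. G s y z) has_real_derivative g x y z) (at x)"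
    and cont: "continuous_on UNIV (\<lambda>(x, y, z). g x y z)"
    and faces: "\<And>y z. G (-M) y z = 0" "\<And>y z. G M y z = 0" and "0 \<le> M"
  shows "integral (cube M) (\<lambda>(x, y, z). g x y z) = 0"
proof -
  have "integral (cube M) (\<lambda>(x, y, z). g x y z)
      = integral {-M..M} (\<lambda>x. integral (cbox (-M, -M) (M, M)) (\<lambda>(y, z). g x y z))"
    by (rule integral_cube_split[OF cont])
  also have "\<dots> = integral (cbox (-M, -M) (M, M)) (\<lambda>(y, z). integral {-M..M} (\<lambda>x. g x y z))"
    using integral_swap_continuous[of "-M" "(-M, -M)" M "(M, M)" "\<lambda>x (y, z). g x y z"]
      continuous_on_subset[OF cont]
    by (simp add: case_prod_unfold)
  also have "\<dots> = integral (cbox (-M, -M) (M, M)) (\<lambda>_. 0)"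
    by (intro integral_cong) (auto intro: integral_eq_0_of_antiderivative_vanishing der faces \<open>0 \<le> M\<close>)
  finally show ?thesis by simp
qed

lemma integral_cube_partial_y_eq_0:
  fixes G g :: "real \<Rightarrow> real \<Rightarrow> real \<Rightarrow> real"
  assumes der: "\<And>x y z. ((\<lambda>s. G x s z) has_real_derivative g x y z) (at y)"
    and cont: "continuous_on UNIV (\<lambda>(x, y, z). g x y z)"
    and faces: "\<And>x z. G x (-M) z = 0" "\<And>x z. G x M z = 0" and "0 \<le> M"
  shows "integral (cube M) (\<lambda>(x, y, z). g x y z) = 0"
proof -
  have inner: "integral (cbox (-M, -M) (M, M)) (\<lambda>(y, z). g x y z) = 0" for x
  proof -
    have cont_x: "continuous_on UNIV (\<lambda>(y, z). g x y z)"
      by (rule continuous_on_slice_first[OF cont])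
    have "integral (cbox (-M, -M) (M, M)) (\<lambda>(y, z). g x y z)
        = integral {-M..M} (\<lambda>y. integral {-M..M} (\<lambda>z. g x y z))"
      by (rule integral_square_split[OF cont_x])
    also have "\<dots> = integral {-M..M} (\<lambda>z. integral {-M..M} (\<lambda>y. g x y z))"
      using integral_swap_continuous[of "-M" "-M" M M "g x"] continuous_on_subset[OF cont_x]
      by simp
    also have "\<dots> = integral {-M..M} (\<lambda>_. 0)"
      by (intro integral_cong) (auto intro: integral_eq_0_of_antiderivative_vanishing der faces \<open>0 \<le> M\<close>)
    finally show ?thesis by simp
  qed
  show ?thesis
    by (simp add: integral_cube_split[OF cont] inner)
qed

lemma integral_cube_partial_z_eq_0:
  fixes G g :: "real \<Rightarrow> real \<Rightarrow> real \<Rightarrow> real"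
  assumes der: "\<And>x y z. ((\<lambda>s. G x y s) has_real_derivative g x y z) (at z)"
    and cont: "continuous_on UNIV (\<lambda>(x, y, z). g x y z)"
    and faces: "\<And>x y. G x y (-M) = 0" "\<And>x y. G x y M = 0" and "0 \<le> M"
  shows "integral (cube M) (\<lambda>(x, y, z). g x y z) = 0"
proof -
  have inner: "integral (cbox (-M, -M) (M, M)) (\<lambda>(y, z). g x y z) = 0" for x
  proof -
    have cont_x: "continuous_on UNIV (\<lambda>(y, z). g x y z)"
      by (rule continuous_on_slice_first[OF cont])
    have "integral (cbox (-M, -M) (M, M)) (\<lambda>(y, z). g x y z)
        = integral {-M..M} (\<lambda>y. integral {-M..M} (\<lambda>z. g x y z))"
      by (rule integral_square_split[OF cont_x])
    also have "\<dots> = integral {-M..M} (\<lambda>_. 0)"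
      by (intro integral_cong) (auto intro: integral_eq_0_of_antiderivative_vanishing der faces \<open>0 \<le> M\<close>)
    finally show ?thesis by simp
  qed
  show ?thesis
    by (simp add: integral_cube_split[OF cont] inner)
qed

lemma dissipative_balance_law_vanishing:
  fixes H Ht G1 G1x G2 G2y G3 G3z :: field
  assumes H_dt: "\<And>x y z t. ((\<lambda>s. H x y z s) has_real_derivative Ht x y z t) (at t)"
    and G1_dx: "\<And>x y z t. ((\<lambda>s. G1 s y z t) has_real_derivative G1x x y z t) (at x)"
    and G2_dy: "\<And>x y z t. ((\<lambda>s. G2 x s z t) has_real_derivative G2y x y z t) (at y)"
    and G3_dz: "\<And>x y z t. ((\<lambda>s. G3 x y s t) has_real_derivative G3z x y z t) (at z)"
    and cont: "continuous_field H" "continuous_field Ht"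
      "continuous_field G1x" "continuous_field G2y" "continuous_field G3z"
    and dissipative: "\<And>x y z t. 0 \<le> t \<Longrightarrow> Ht x y z t + G1x x y z t + G2y x y z t + G3z x y z t \<le> 0"
    and faces: "\<And>y z t. 0 \<le> t \<Longrightarrow> G1 (-M) y z t = 0 \<and> G1 M y z t = 0"
      "\<And>x z t. 0 \<le> t \<Longrightarrow> G2 x (-M) z t = 0 \<and> G2 x M z t = 0"
      "\<And>x y t. 0 \<le> t \<Longrightarrow> G3 x y (-M) t = 0 \<and> G3 x y M t = 0"
    and nonneg: "\<And>x y z t. 0 \<le> H x y z t" and init: "\<And>x y z. H x y z 0 = 0"
    and "0 < M" "0 \<le> t" "(x, y, z) \<in> cube M"
  shows "H x y z t = 0"
proof -
  note slice = continuous_field_slice[where S=UNIV]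
  have int: "(\<lambda>(x, y, z). g x y z t) integrable_on cube M" if "continuous_field g" for g t
    by (rule integrable_continuous[OF continuous_field_slice[OF that]])
  define E where "E t = integral (cube M) (\<lambda>(x, y, z). H x y z t)" for t
  have E_deriv: "(E has_real_derivative integral (cube M) (\<lambda>(x, y, z). Ht x y z t)) (at t)" for t
    unfolding E_def
    using leibniz_rule_field_derivative[where U=UNIV and f="\<lambda>t (x, y, z). H x y z t"
        and fx="\<lambda>t (x, y, z). Ht x y z t"] H_dt int[OF cont(1)]
      continuous_field_time_space[OF cont(2)]
    by (simp add: case_prod_unfold)
  have "integral (cube M) (\<lambda>(x, y, z). Ht x y z t) \<le> 0" if "0 \<le> t" for t
  proof -
    let ?D = "\<lambda>(x, y, z). Ht x y z t + G1x x y z t + G2y x y z t + G3z x y z t"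
    have "integral (cube M) ?D
        = integral (cube M) (\<lambda>(x, y, z). Ht x y z t) + integral (cube M) (\<lambda>(x, y, z). G1x x y z t)
          + integral (cube M) (\<lambda>(x, y, z). G2y x y z t) + integral (cube M) (\<lambda>(x, y, z). G3z x y z t)"
      using int[OF cont(2)] int[OF cont(3)] int[OF cont(4)] int[OF cont(5)]
      by (simp add: integral_add integrable_add case_prod_unfold)
    also have "\<dots> = integral (cube M) (\<lambda>(x, y, z). Ht x y z t)"
      using integral_cube_partial_x_eq_0[OF G1_dx slice[OF cont(3)]]
        integral_cube_partial_y_eq_0[OF G2_dy slice[OF cont(4)]]
        integral_cube_partial_z_eq_0[OF G3_dz slice[OF cont(5)]]
        faces[OF that] \<open>0 < M\<close> by simp
    finally have "integral (cube M) (\<lambda>(x, y, z). Ht x y z t) = integral (cube M) ?D" ..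
    also have "\<dots> \<le> integral (cube M) (\<lambda>_. 0)"
      using int[OF cont(2)] int[OF cont(3)] int[OF cont(4)] int[OF cont(5)] dissipative[OF that]
      by (intro integral_le) (auto simp: integrable_add case_prod_unfold)
    finally show ?thesis by simp
  qed
  then have "E t \<le> E 0"
    using DERIV_nonpos_imp_nonincreasing[OF \<open>0 \<le> t\<close>, of E] E_deriv by blast
  moreover have "E 0 = 0"
    unfolding E_def using init by (simp add: case_prod_unfold)
  moreover have "0 \<le> E t"
    unfolding E_def using nonneg int[OF cont(1)] by (intro integral_nonneg) auto
  ultimately have "integral (cube M) (\<lambda>(x, y, z). H x y z t) = 0"
    unfolding E_def by simp
  then have vanish: "\<forall>p\<in>cube M. (\<lambda>(x, y, z). H x y z t) p = 0"
    using \<open>0 < M\<close> nonneg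
    by (subst (asm) integral_cbox_eq_0_iff) (auto intro: continuous_field_slice[OF cont(1)]
        simp: box_ne_empty Basis_prod_def)
  show ?thesis using bspec[OF vanish \<open>(x, y, z) \<in> cube M\<close>] by simp
qed

section \<open>The linearised Euler system\<close>

definition acoustic_system ::
  "real \<Rightarrow> real \<Rightarrow> real \<Rightarrow> field \<Rightarrow> field \<Rightarrow> field \<Rightarrow> field \<Rightarrow> field \<Rightarrow> field \<Rightarrow> field \<Rightarrow> field \<Rightarrow> bool"
  where
  "acoustic_system U0 c0 rho0 vx vy vz p sx sy sz sp \<longleftrightarrow>
     C1_4 vx \<and> C1_4 vy \<and> C1_4 vz \<and> C1_4 p \<and>
     (\<forall>x y z t. 0 \<le> t \<longrightarrow>
        pdt vx x y z t + U0 * pdx vx x y z t + (1 / rho0) * pdx p x y z t = sx x y z t \<and>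
        pdt vy x y z t + U0 * pdx vy x y z t + (1 / rho0) * pdy p x y z t = sy x y z t \<and>
        pdt vz x y z t + U0 * pdx vz x y z t + (1 / rho0) * pdz p x y z t = sz x y z t \<and>
        pdt p x y z t + U0 * pdx p x y z t
          + rho0 * c0\<^sup>2 * (pdx vx x y z t + pdy vy x y z t + pdz vz x y z t) = sp x y z t)"

lemma acoustic_system_sum:
  assumes "\<And>i. i \<in> I \<Longrightarrow>
    acoustic_system U0 c0 rho0 (vx i) (vy i) (vz i) (p i) (sx i) (sy i) (sz i) (sp i)"
  shows "acoustic_system U0 c0 rho0
    (\<lambda>x y z t. \<Sum>i\<in>I. vx i x y z t) (\<lambda>x y z t. \<Sum>i\<in>I. vy i x y z t)
    (\<lambda>x y z t. \<Sum>i\<in>I. vz i x y z t) (\<lambda>x y z t. \<Sum>i\<in>I. p i x y z t)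
    (\<lambda>x y z t. \<Sum>i\<in>I. sx i x y z t) (\<lambda>x y z t. \<Sum>i\<in>I. sy i x y z t)
    (\<lambda>x y z t. \<Sum>i\<in>I. sz i x y z t) (\<lambda>x y z t. \<Sum>i\<in>I. sp i x y z t)"
proof -
  have partials: "has_partials (\<lambda>x y z t. \<Sum>i\<in>I. f i x y z t) (\<lambda>x y z t. \<Sum>i\<in>I. pdx (f i) x y z t)
      (\<lambda>x y z t. \<Sum>i\<in>I. pdy (f i) x y z t) (\<lambda>x y z t. \<Sum>i\<in>I. pdz (f i) x y z t)
      (\<lambda>x y z t. \<Sum>i\<in>I. pdt (f i) x y z t)"
    if "\<And>i. i \<in> I \<Longrightarrow> C1_4 (f i)" for f
    using that by (intro has_partials_sum) (simp add: C1_4_iff_has_partials)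
  note sum = has_partials_C1_4[OF partials]
  have "C1_4 (vx i) \<and> C1_4 (vy i) \<and> C1_4 (vz i) \<and> C1_4 (p i)" if "i \<in> I" for i
    using assms[OF that] by (simp add: acoustic_system_def)
  moreover have
    "pdt (vx i) x y z t + U0 * pdx (vx i) x y z t + 1 / rho0 * pdx (p i) x y z t = sx i x y z t"
    "pdt (vy i) x y z t + U0 * pdx (vy i) x y z t + 1 / rho0 * pdy (p i) x y z t = sy i x y z t"
    "pdt (vz i) x y z t + U0 * pdx (vz i) x y z t + 1 / rho0 * pdz (p i) x y z t = sz i x y z t"
    "pdt (p i) x y z t + U0 * pdx (p i) x y z t
       + rho0 * c0\<^sup>2 * (pdx (vx i) x y z t + pdy (vy i) x y z t + pdz (vz i) x y z t) = sp i x y z t"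
    if "i \<in> I" "0 \<le> t" for i x y z t
    using assms[OF that(1)] that(2) unfolding acoustic_system_def by blast+
  ultimately show ?thesis
    unfolding acoustic_system_def
    by (simp add: sum sum_distrib_left sum.distrib[symmetric] cong: sum.cong)
qed

lemma acoustic_system_diff:
  assumes "acoustic_system U0 c0 rho0 vx vy vz p sx sy sz sp"
    and "acoustic_system U0 c0 rho0 wx wy wz q rx ry rz rp"
  shows "acoustic_system U0 c0 rho0
    (\<lambda>x y z t. vx x y z t - wx x y z t) (\<lambda>x y z t. vy x y z t - wy x y z t)
    (\<lambda>x y z t. vz x y z t - wz x y z t) (\<lambda>x y z t. p x y z t - q x y z t)
    (\<lambda>x y z t. sx x y z t - rx x y z t) (\<lambda>x y z t. sy x y z t - ry x y z t)
    (\<lambda>x y z t. sz x y z t - rz x y z t) (\<lambda>x y z t. sp x y z t - rp x y z t)"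
proof -
  have diff: "has_partials (\<lambda>x y z t. f x y z t - g x y z t)
      (\<lambda>x y z t. pdx f x y z t - pdx g x y z t) (\<lambda>x y z t. pdy f x y z t - pdy g x y z t)
      (\<lambda>x y z t. pdz f x y z t - pdz g x y z t) (\<lambda>x y z t. pdt f x y z t - pdt g x y z t)"
    if "C1_4 f" "C1_4 g" for f g
    using that by (intro has_partials_diff) (simp_all add: C1_4_iff_has_partials)
  note diff' = has_partials_C1_4[OF diff]
  show ?thesis
    using assms unfolding acoustic_system_def
    by (simp add: diff' algebra_simps)
qed

lemma is_solution_acoustic_system:
  assumes "is_solution U0 c0 rho0 \<omega> F G H P vx vy vz p"
  shows "acoustic_system U0 c0 rho0 vx vy vz p
    (\<lambda>x y z t. F x y z * sin (\<omega> * t)) (\<lambda>x y z t. G x y z * sin (\<omega> * t))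
    (\<lambda>x y z t. H x y z * sin (\<omega> * t)) (\<lambda>x y z t. P x y z * sin (\<omega> * t))"
  using assms unfolding is_solution_def acoustic_system_def by (simp add: heaviside_def)

section \<open>Uniqueness by the energy method\<close>

lemma DERIV_max_0_power2: "((\<lambda>s. (max s 0)\<^sup>2) has_real_derivative 2 * max s 0) (at s)"
proof (cases "s = 0")
  case True
  have "((\<lambda>y::real. ((max y 0)\<^sup>2 - (max 0 0)\<^sup>2) / (y - 0)) \<longlongrightarrow> 0) (at 0)"
  proof (rule Lim_null_comparison)
    show "\<forall>\<^sub>F y in at 0. norm (((max y 0)\<^sup>2 - (max 0 0)\<^sup>2) / (y - 0)) \<le> \<bar>y\<bar>"
      by (auto simp: max_def power2_eq_square abs_mult divide_simps intro!: always_eventually)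
    show "((\<lambda>y::real. \<bar>y\<bar>) \<longlongrightarrow> 0) (at 0)"
      using tendsto_rabs[OF tendsto_ident_at[of 0 UNIV]] by simp
  qed
  with True show ?thesis by (simp add: has_field_derivative_iff)
next
  case False
  then consider "0 < s" | "s < 0" by linarith
  then show ?thesis
  proof cases
    case 1
    have "((\<lambda>y. y\<^sup>2) has_real_derivative 2 * max s 0) (at s)"
      using 1 by (auto intro!: derivative_eq_intros)
    then show ?thesis
      by (rule has_field_derivative_transform_within_open[where S="{0<..}"]) (use 1 in auto)
  next
    case 2
    have "((\<lambda>y. 0) has_real_derivative 2 * max s 0) (at s)"
      using 2 by simp
    then show ?thesis
      by (rule has_field_derivative_transform_within_open[where S="{..<0}"]) (use 2 in auto)
  qed
qed

(* Positive exactly on a ball that drifts with the flow and whose radius shrinks at least as fast as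
   sound propagates: no acoustic energy can enter it. *)
definition cone_weight :: "real \<Rightarrow> real \<Rightarrow> real \<Rightarrow> real \<Rightarrow> real \<Rightarrow> real \<Rightarrow> real \<Rightarrow> real" where
  "cone_weight U c R x y z t = R\<^sup>2 - 2 * c * R * t - ((x - U * t)\<^sup>2 + y\<^sup>2 + z\<^sup>2)"

lemma cone_weight_pos_imp_bounded:
  assumes "0 < c" "0 < R" "0 \<le> t" "0 < cone_weight U c R x y z t"
  shows "\<bar>x\<bar> < R + \<bar>U\<bar> * R / (2 * c)" "\<bar>y\<bar> < R" "\<bar>z\<bar> < R"
proof -
  have "0 \<le> 2 * c * R * t" using assms by simp
  moreover have "(x - U * t)\<^sup>2 + y\<^sup>2 + z\<^sup>2 < R\<^sup>2 - 2 * c * R * t"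
    using assms(4) by (simp add: cone_weight_def)
  ultimately have ball: "(x - U * t)\<^sup>2 + y\<^sup>2 + z\<^sup>2 < R\<^sup>2" and "2 * c * R * t < R\<^sup>2"
    using zero_le_power2[of "x - U * t"] zero_le_power2[of y] zero_le_power2[of z] by linarith+
  then have "t < R / (2 * c)"
    using assms by (simp add: field_simps power2_eq_square)
  then have drift: "\<bar>U\<bar> * t \<le> \<bar>U\<bar> * R / (2 * c)"
    using mult_left_mono[of t "R / (2 * c)" "\<bar>U\<bar>"] by simp
  have abs_less: "\<bar>a\<bar> < R" if "a\<^sup>2 < R\<^sup>2" for a
    using power_less_imp_less_base[of "\<bar>a\<bar>" 2 R] that \<open>0 < R\<close> by simp
  show "\<bar>y\<bar> < R" "\<bar>z\<bar> < R"
    using ball zero_le_power2[of "x - U * t"] zero_le_power2[of y] zero_le_power2[of z]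
    by (intro abs_less; linarith)+
  have "\<bar>x - U * t\<bar> < R"
    using ball zero_le_power2[of y] zero_le_power2[of z] by (intro abs_less) linarith
  moreover have "\<bar>x\<bar> \<le> \<bar>x - U * t\<bar> + \<bar>U\<bar> * t"
    using abs_triangle_ineq[of "x - U * t" "U * t"] \<open>0 \<le> t\<close> by (simp add: abs_mult)
  ultimately show "\<bar>x\<bar> < R + \<bar>U\<bar> * R / (2 * c)"
    using drift by linarith
qed

lemma cone_weight_pos_at_apex:
  assumes "0 < c" "0 \<le> t"
  shows "0 < cone_weight U c (2 * c * t + \<bar>x - U * t\<bar> + \<bar>y\<bar> + \<bar>z\<bar> + 1) x y z t"
proof -
  define A where "A = \<bar>x - U * t\<bar> + \<bar>y\<bar> + \<bar>z\<bar>"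
  define R where "R = 2 * c * t + \<bar>x - U * t\<bar> + \<bar>y\<bar> + \<bar>z\<bar> + 1"
  have R_eq: "R = 2 * c * t + A + 1" by (simp add: R_def A_def)
  have "0 \<le> A" "0 \<le> 2 * c * t" using assms by (simp_all add: A_def)
  have "A\<^sup>2 = (x - U * t)\<^sup>2 + y\<^sup>2 + z\<^sup>2
      + 2 * (\<bar>x - U * t\<bar> * \<bar>y\<bar> + \<bar>x - U * t\<bar> * \<bar>z\<bar> + \<bar>y\<bar> * \<bar>z\<bar>)"
    by (simp add: A_def power2_eq_square algebra_simps abs_mult_self_eq)
  then have "(x - U * t)\<^sup>2 + y\<^sup>2 + z\<^sup>2 \<le> A\<^sup>2"
    by simp
  also have "\<dots> < (A + 1) * (A + 1)"
    using \<open>0 \<le> A\<close> by (simp add: power2_eq_square algebra_simps)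
  also have "\<dots> \<le> R * (A + 1)"
    using \<open>0 \<le> A\<close> \<open>0 \<le> 2 * c * t\<close> by (intro mult_right_mono) (auto simp: R_eq)
  also have "\<dots> = R\<^sup>2 - 2 * c * R * t"
    by (simp add: R_eq power2_eq_square algebra_simps)
  finally have "(x - U * t)\<^sup>2 + y\<^sup>2 + z\<^sup>2 < R\<^sup>2 - 2 * c * R * t" .
  then show ?thesis
    unfolding cone_weight_def R_def by linarith
qed

lemma acoustic_flux_le_energy:
  fixes X Y Z d1 d2 d3 q :: real
  assumes "0 < rho" "0 < c" "0 < R" "X\<^sup>2 + Y\<^sup>2 + Z\<^sup>2 \<le> R\<^sup>2"
  shows "2 / rho * \<bar>q * (X * d1 + Y * d2 + Z * d3)\<bar>
      \<le> c * R * (d1\<^sup>2 + d2\<^sup>2 + d3\<^sup>2 + (q / (rho * c))\<^sup>2)"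
proof -
  define a where "a = rho * c"
  define D where "D = d1\<^sup>2 + d2\<^sup>2 + d3\<^sup>2"
  define S where "S = X * d1 + Y * d2 + Z * d3"
  have "0 < a" "0 \<le> D" using assms by (simp_all add: a_def D_def)
  have "(X\<^sup>2 + Y\<^sup>2 + Z\<^sup>2) * D - S\<^sup>2 = (X * d2 - Y * d1)\<^sup>2 + (X * d3 - Z * d1)\<^sup>2 + (Y * d3 - Z * d2)\<^sup>2"
    by (simp add: D_def S_def power2_eq_square algebra_simps)
  then have "S\<^sup>2 \<le> (X\<^sup>2 + Y\<^sup>2 + Z\<^sup>2) * D"
    by (smt (verit) zero_le_power2)
  also have "\<dots> \<le> R\<^sup>2 * D"
    using assms(4) \<open>0 \<le> D\<close> by (rule mult_right_mono)
  finally have "a\<^sup>2 * S\<^sup>2 \<le> a\<^sup>2 * (R\<^sup>2 * D)"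
    by (simp add: mult_left_mono)
  moreover have "2 * a * R * \<bar>q * S\<bar> \<le> a\<^sup>2 * S\<^sup>2 + R\<^sup>2 * q\<^sup>2"
    using zero_le_power2[of "a * \<bar>S\<bar> - R * \<bar>q\<bar>"] \<open>0 < R\<close> \<open>0 < a\<close>
    by (simp add: power2_eq_square algebra_simps abs_mult)
  moreover have "a\<^sup>2 * (R\<^sup>2 * D) + R\<^sup>2 * q\<^sup>2 = (a * R) * (R * (a * D + q\<^sup>2 / a))"
    using \<open>0 < a\<close> by (simp add: field_simps power2_eq_square)
  ultimately have "2 * a * R * \<bar>q * S\<bar> \<le> (a * R) * (R * (a * D + q\<^sup>2 / a))"
    by linarith
  then have "(a * R) * (2 * \<bar>q * S\<bar>) \<le> (a * R) * (R * (a * D + q\<^sup>2 / a))"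
    by (simp add: mult.assoc mult.left_commute)
  then have "2 * \<bar>q * S\<bar> \<le> R * (a * D + q\<^sup>2 / a)"
    using \<open>0 < a\<close> \<open>0 < R\<close> by (simp add: mult_le_cancel_left_pos)
  then have "2 / rho * \<bar>q * S\<bar> \<le> R * (a * D + q\<^sup>2 / a) / rho"
    using \<open>0 < rho\<close> by (simp add: divide_right_mono)
  also have "\<dots> = c * R * (D + (q / a)\<^sup>2)"
    using assms by (simp add: a_def field_simps power2_eq_square)
  finally show ?thesis
    by (simp add: a_def D_def S_def)
qed

(* For a solution of the homogeneous system, the acoustic energy cut off to the region where
   cone_weight is positive satisfies a balance law whose production term is nonpositive. *)
locale acoustic_cone =
  fixes U0 c0 rho0 R :: real and vx vy vz p :: field
  assumes c0: "0 < c0" and rho0: "0 < rho0" and R: "0 < R"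
    and homogeneous: "acoustic_system U0 c0 rho0 vx vy vz p
      (\<lambda>_ _ _ _. 0) (\<lambda>_ _ _ _. 0) (\<lambda>_ _ _ _. 0) (\<lambda>_ _ _ _. 0)"
begin

definition cutoff :: field where
  "cutoff x y z t = (max (cone_weight U0 c0 R x y z t) 0)\<^sup>2"

definition cutoff' :: field where
  "cutoff' x y z t = 2 * max (cone_weight U0 c0 R x y z t) 0"

definition energy :: field where
  "energy x y z t = (vx x y z t)\<^sup>2 + (vy x y z t)\<^sup>2 + (vz x y z t)\<^sup>2 + (p x y z t / (rho0 * c0))\<^sup>2"

definition energy_rate :: "(field \<Rightarrow> field) \<Rightarrow> field" where
  "energy_rate D x y z t = 2 * vx x y z t * D vx x y z t + 2 * vy x y z t * D vy x y z t
     + 2 * vz x y z t * D vz x y z t + 2 * (p x y z t / (rho0 * c0)) * (D p x y z t / (rho0 * c0))"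

definition density :: field where
  "density x y z t = cutoff x y z t * energy x y z t"

definition density_t :: field where
  "density_t x y z t = cutoff' x y z t * (2 * U0 * (x - U0 * t) - 2 * c0 * R) * energy x y z t
     + cutoff x y z t * energy_rate pdt x y z t"

definition flux_x :: field where
  "flux_x x y z t = cutoff x y z t * (U0 * energy x y z t + 2 / rho0 * (p x y z t * vx x y z t))"

definition flux_x_x :: field where
  "flux_x_x x y z t = cutoff' x y z t * (- 2 * (x - U0 * t))
       * (U0 * energy x y z t + 2 / rho0 * (p x y z t * vx x y z t))
     + cutoff x y z t * (U0 * energy_rate pdx x y z t
       + 2 / rho0 * (pdx p x y z t * vx x y z t + p x y z t * pdx vx x y z t))"

definition flux_y :: field where
  "flux_y x y z t = cutoff x y z t * (2 / rho0 * (p x y z t * vy x y z t))"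

definition flux_y_y :: field where
  "flux_y_y x y z t = cutoff' x y z t * (- 2 * y) * (2 / rho0 * (p x y z t * vy x y z t))
     + cutoff x y z t * (2 / rho0 * (pdy p x y z t * vy x y z t + p x y z t * pdy vy x y z t))"

definition flux_z :: field where
  "flux_z x y z t = cutoff x y z t * (2 / rho0 * (p x y z t * vz x y z t))"

definition flux_z_z :: field where
  "flux_z_z x y z t = cutoff' x y z t * (- 2 * z) * (2 / rho0 * (p x y z t * vz x y z t))
     + cutoff x y z t * (2 / rho0 * (pdz p x y z t * vz x y z t + p x y z t * pdz vz x y z t))"

lemma partials:
  "has_partials vx (pdx vx) (pdy vx) (pdz vx) (pdt vx)"
  "has_partials vy (pdx vy) (pdy vy) (pdz vy) (pdt vy)"
  "has_partials vz (pdx vz) (pdy vz) (pdz vz) (pdt vz)"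
  "has_partials p (pdx p) (pdy p) (pdz p) (pdt p)"
  using homogeneous by (simp_all add: acoustic_system_def C1_4_iff_has_partials)

lemma cutoff_derivatives:
  "((\<lambda>s. cutoff s y z t) has_real_derivative cutoff' x y z t * (- 2 * (x - U0 * t))) (at x)"
  "((\<lambda>s. cutoff x s z t) has_real_derivative cutoff' x y z t * (- 2 * y)) (at y)"
  "((\<lambda>s. cutoff x y s t) has_real_derivative cutoff' x y z t * (- 2 * z)) (at z)"
  "((\<lambda>s. cutoff x y z s) has_real_derivative
     cutoff' x y z t * (2 * U0 * (x - U0 * t) - 2 * c0 * R)) (at t)"
  unfolding cutoff_def cutoff'_def cone_weight_def
  by (rule DERIV_chain2[OF DERIV_max_0_power2]; auto intro!: derivative_eq_intros simp: algebra_simps)+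

lemma energy_derivatives:
  "((\<lambda>s. energy s y z t) has_real_derivative energy_rate pdx x y z t) (at x)"
  "((\<lambda>s. energy x y z s) has_real_derivative energy_rate pdt x y z t) (at t)"
  unfolding energy_def energy_rate_def using rho0 c0
  by (auto intro!: derivative_eq_intros has_partialsD[OF partials(1)] has_partialsD[OF partials(2)]
      has_partialsD[OF partials(3)] has_partialsD[OF partials(4)])

lemma density_derivatives:
  "((\<lambda>s. density x y z s) has_real_derivative density_t x y z t) (at t)"
  "((\<lambda>s. flux_x s y z t) has_real_derivative flux_x_x x y z t) (at x)"
  "((\<lambda>s. flux_y x s z t) has_real_derivative flux_y_y x y z t) (at y)"
  "((\<lambda>s. flux_z x y s t) has_real_derivative flux_z_z x y z t) (at z)"
  unfolding density_def density_t_def flux_x_def flux_x_x_def flux_y_def flux_y_y_def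
    flux_z_def flux_z_z_def using rho0
  by (auto intro!: derivative_eq_intros cutoff_derivatives energy_derivatives
      has_partialsD[OF partials(1)] has_partialsD[OF partials(2)]
      has_partialsD[OF partials(3)] has_partialsD[OF partials(4)]
      simp: field_simps)

lemma density_continuous:
  "continuous_field density" "continuous_field density_t"
  "continuous_field flux_x_x" "continuous_field flux_y_y" "continuous_field flux_z_z"
proof -
  have weight: "continuous_field (cone_weight U0 c0 R)"
    unfolding cone_weight_def by (intro continuous_field_intros)
  have cutoff: "continuous_field cutoff" "continuous_field cutoff'"
    unfolding cutoff_def cutoff'_def
    by (rule continuous_field_compose[OF _ weight], intro continuous_intros)+
  have energy: "continuous_field energy"
    "continuous_field (energy_rate pdx)" "continuous_field (energy_rate pdt)"
    unfolding energy_def energy_rate_def power2_eq_square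
    by (intro continuous_field_intros has_partialsD[OF partials(1)] has_partialsD[OF partials(2)]
        has_partialsD[OF partials(3)] has_partialsD[OF partials(4)])+
  show "continuous_field density" "continuous_field density_t"
    "continuous_field flux_x_x" "continuous_field flux_y_y" "continuous_field flux_z_z"
    unfolding density_def density_t_def flux_x_x_def flux_y_y_def flux_z_z_def
    by (intro continuous_field_intros cutoff energy has_partialsD[OF partials(1)]
        has_partialsD[OF partials(2)] has_partialsD[OF partials(3)] has_partialsD[OF partials(4)])+
qed

lemma density_balance:
  assumes "0 \<le> t"
  shows "density_t x y z t + flux_x_x x y z t + flux_y_y x y z t + flux_z_z x y z t
    = cutoff' x y z t * (- 2 * (c0 * R * energy x y z t)
        - 2 * (2 / rho0 * (p x y z t * ((x - U0 * t) * vx x y z t + y * vy x y z t + z * vz x y z t))))"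
proof -
  have "pdt vx x y z t + U0 * pdx vx x y z t + (1 / rho0) * pdx p x y z t = 0 \<and>
    pdt vy x y z t + U0 * pdx vy x y z t + (1 / rho0) * pdy p x y z t = 0 \<and>
    pdt vz x y z t + U0 * pdx vz x y z t + (1 / rho0) * pdz p x y z t = 0 \<and>
    pdt p x y z t + U0 * pdx p x y z t
      + rho0 * c0\<^sup>2 * (pdx vx x y z t + pdy vy x y z t + pdz vz x y z t) = 0"
    using homogeneous assms unfolding acoustic_system_def by blast
  then have "pdt vx x y z t = - U0 * pdx vx x y z t - (1 / rho0) * pdx p x y z t"
    "pdt vy x y z t = - U0 * pdx vy x y z t - (1 / rho0) * pdy p x y z t"
    "pdt vz x y z t = - U0 * pdx vz x y z t - (1 / rho0) * pdz p x y z t"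
    "pdt p x y z t = - U0 * pdx p x y z t
       - rho0 * c0\<^sup>2 * (pdx vx x y z t + pdy vy x y z t + pdz vz x y z t)"
    by linarith+
  note pde = this
  show ?thesis
    unfolding density_t_def flux_x_x_def flux_y_y_def flux_z_z_def energy_rate_def pde energy_def
    using rho0 c0 by (simp add: field_simps power2_eq_square)
qed

lemma density_dissipative:
  assumes "0 \<le> t"
  shows "density_t x y z t + flux_x_x x y z t + flux_y_y x y z t + flux_z_z x y z t \<le> 0"
proof (cases "cone_weight U0 c0 R x y z t \<le> 0")
  case True
  then show ?thesis by (simp add: density_balance[OF assms] cutoff'_def)
next
  case False
  define S where "S = (x - U0 * t) * vx x y z t + y * vy x y z t + z * vz x y z t"
  have "0 \<le> 2 * c0 * R * t" using c0 R assms by simp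
  with False have "(x - U0 * t)\<^sup>2 + y\<^sup>2 + z\<^sup>2 \<le> R\<^sup>2"
    unfolding cone_weight_def by linarith
  then have "2 / rho0 * \<bar>p x y z t * S\<bar> \<le> c0 * R * energy x y z t"
    unfolding S_def energy_def by (rule acoustic_flux_le_energy[OF rho0 c0 R])
  moreover have "- (2 / rho0 * (p x y z t * S)) \<le> 2 / rho0 * \<bar>p x y z t * S\<bar>"
    using mult_left_mono[OF abs_ge_minus_self, of "2 / rho0" "p x y z t * S"] rho0 by simp
  ultimately have "- 2 * (c0 * R * energy x y z t) - 2 * (2 / rho0 * (p x y z t * S)) \<le> 0"
    by (smt (verit))
  moreover have "0 \<le> cutoff' x y z t" by (simp add: cutoff'_def)
  ultimately show ?thesis
    unfolding density_balance[OF assms] S_def[symmetric] by (rule mult_nonneg_nonpos[rotated])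
qed

lemma cutoff_outside_cone:
  assumes "0 \<le> t" "R + \<bar>U0\<bar> * R / (2 * c0) \<le> \<bar>x\<bar> \<or> R \<le> \<bar>y\<bar> \<or> R \<le> \<bar>z\<bar>"
  shows "cutoff x y z t = 0"
proof -
  have "\<not> 0 < cone_weight U0 c0 R x y z t"
    using cone_weight_pos_imp_bounded[OF c0 R assms(1)] assms(2) by fastforce
  then show ?thesis by (simp add: cutoff_def)
qed

lemma energy_vanishes_in_cone:
  assumes init: "\<And>x y z. vx x y z 0 = 0 \<and> vy x y z 0 = 0 \<and> vz x y z 0 = 0 \<and> p x y z 0 = 0"
    and "0 \<le> t" "0 < cone_weight U0 c0 R x y z t"
  shows "energy x y z t = 0"
proof -
  define M where "M = R + \<bar>U0\<bar> * R / (2 * c0)"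
  have "R \<le> M" "0 < M" using c0 R by (simp_all add: M_def add_pos_nonneg)
  have "density x y z t = 0"
  proof (rule dissipative_balance_law_vanishing[OF density_derivatives density_continuous
        density_dissipative])
    have "\<bar>x\<bar> < M" "\<bar>y\<bar> < M" "\<bar>z\<bar> < M"
      using cone_weight_pos_imp_bounded[OF c0 R \<open>0 \<le> t\<close> assms(3)] \<open>R \<le> M\<close>
      unfolding M_def by linarith+
    then show "(x, y, z) \<in> cube M"
      by (auto simp: abs_less_iff)
  qed (use cutoff_outside_cone \<open>R \<le> M\<close> \<open>0 < M\<close> \<open>0 \<le> t\<close> init
      in \<open>auto simp: M_def flux_x_def flux_y_def flux_z_def density_def energy_def cutoff_def\<close>)
  moreover have "0 < cutoff x y z t"
    using assms(3) by (simp add: cutoff_def)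
  ultimately show ?thesis
    by (simp add: density_def)
qed

end

lemma acoustic_system_zero_data_vanishes:
  assumes "0 < c0" "0 < rho0"
    and "acoustic_system U0 c0 rho0 vx vy vz p
      (\<lambda>_ _ _ _. 0) (\<lambda>_ _ _ _. 0) (\<lambda>_ _ _ _. 0) (\<lambda>_ _ _ _. 0)"
    and init: "\<And>x y z. vx x y z 0 = 0 \<and> vy x y z 0 = 0 \<and> vz x y z 0 = 0 \<and> p x y z 0 = 0"
    and "0 \<le> t"
  shows "vx x y z t = 0 \<and> vy x y z t = 0 \<and> vz x y z t = 0 \<and> p x y z t = 0"
proof -
  define R where "R = 2 * c0 * t + \<bar>x - U0 * t\<bar> + \<bar>y\<bar> + \<bar>z\<bar> + 1"
  have "0 < R" using assms(1,5) by (simp add: R_def add_nonneg_pos)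
  interpret acoustic_cone U0 c0 rho0 R vx vy vz p
    using assms(1-3) \<open>0 < R\<close> by unfold_locales
  have "energy x y z t = 0"
    using energy_vanishes_in_cone[OF init assms(5)] cone_weight_pos_at_apex[OF assms(1,5)]
    by (simp add: R_def)
  then show ?thesis
    using zero_le_power2[of "vx x y z t"] zero_le_power2[of "vy x y z t"]
      zero_le_power2[of "vz x y z t"] zero_le_power2[of "p x y z t / (rho0 * c0)"] assms(1,2)
    by (simp add: energy_def add_nonneg_eq_0_iff)
qed

lemma acoustic_system_unique:
  assumes "0 < c0" "0 < rho0"
    and "acoustic_system U0 c0 rho0 vx vy vz p sx sy sz sp"
    and "acoustic_system U0 c0 rho0 wx wy wz q sx sy sz sp"
    and "\<And>x y z. vx x y z 0 = wx x y z 0 \<and> vy x y z 0 = wy x y z 0 \<and>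
                  vz x y z 0 = wz x y z 0 \<and> p x y z 0 = q x y z 0"
    and "0 \<le> t"
  shows "vx x y z t = wx x y z t \<and> vy x y z t = wy x y z t \<and>
         vz x y z t = wz x y z t \<and> p x y z t = q x y z t"
proof -
  have "acoustic_system U0 c0 rho0
    (\<lambda>x y z t. vx x y z t - wx x y z t) (\<lambda>x y z t. vy x y z t - wy x y z t)
    (\<lambda>x y z t. vz x y z t - wz x y z t) (\<lambda>x y z t. p x y z t - q x y z t)
    (\<lambda>_ _ _ _. 0) (\<lambda>_ _ _ _. 0) (\<lambda>_ _ _ _. 0) (\<lambda>_ _ _ _. 0)"
    using acoustic_system_diff[OF assms(3,4)] by simp
  from acoustic_system_zero_data_vanishes[OF assms(1,2) this _ assms(6)] show ?thesis
    using assms(5) by simp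
qed

section \<open>The one-dimensional transport equation with a periodic source\<close>

definition transport_solution :: "real \<Rightarrow> real \<Rightarrow> (real \<Rightarrow> real) \<Rightarrow> (real \<Rightarrow> real \<Rightarrow> real) \<Rightarrow> bool"
  where
  "transport_solution \<sigma> \<omega> f u \<longleftrightarrow>
     (\<exists>ux ut. (\<forall>x t. ((\<lambda>s. u s t) has_real_derivative ux x t) (at x) \<and>
                      ((\<lambda>s. u x s) has_real_derivative ut x t) (at t) \<and>
                      ut x t + \<sigma> * ux x t = f x * sin (\<omega> * t)) \<and>
        continuous_on UNIV (\<lambda>(x, t). u x t) \<and> continuous_on UNIV (\<lambda>(x, t). ux x t) \<and>
        continuous_on UNIV (\<lambda>(x, t). ut x t)) \<and>
     (\<forall>x. u x 0 = 0)"

lemma periodic_tendsto_0_imp_0: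
  fixes g :: "real \<Rightarrow> real"
  assumes "(g \<longlongrightarrow> 0) at_top" "0 < P" "\<And>t. g (t + P) = g t"
  shows "g t = 0"
proof -
  have "g (t + real n * P) = g t" for n
    by (induction n)
       (simp_all add: algebra_simps assms(3)[of "t + real _ * P", simplified algebra_simps])
  moreover have "filterlim (\<lambda>n. t + real n * P) at_top sequentially"
    using \<open>0 < P\<close>
    by (intro filterlim_tendsto_add_at_top[OF tendsto_const]
        filterlim_at_top_mult_tendsto_pos[OF tendsto_const] filterlim_real_sequentially)
  ultimately have "(\<lambda>n::nat. g t) \<longlonglongrightarrow> 0"
    using filterlim_compose[OF assms(1)] by fastforce
  then show ?thesis by (simp add: LIMSEQ_const_iff)
qed

lemma sin_cos_add_period:
  assumes "\<omega> \<noteq> 0"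
  shows "sin (\<omega> * (t + 2 * pi / \<bar>\<omega>\<bar>) + \<phi>) = sin (\<omega> * t + \<phi>)"
    and "cos (\<omega> * (t + 2 * pi / \<bar>\<omega>\<bar>) + \<phi>) = cos (\<omega> * t + \<phi>)"
proof -
  have "\<omega> * (t + 2 * pi / \<bar>\<omega>\<bar>) + \<phi> = \<omega> * t + \<phi> + sgn \<omega> * (2 * pi)"
    using assms by (simp add: field_simps sgn_if)
  moreover have "sgn \<omega> = 1 \<or> sgn \<omega> = -1"
    using assms by (simp add: sgn_if)
  ultimately show "sin (\<omega> * (t + 2 * pi / \<bar>\<omega>\<bar>) + \<phi>) = sin (\<omega> * t + \<phi>)"
    and "cos (\<omega> * (t + 2 * pi / \<bar>\<omega>\<bar>) + \<phi>) = cos (\<omega> * t + \<phi>)"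
    by (auto simp: sin_add cos_add)
qed

lemma transport_solution_stationary:
  assumes "f C1_differentiable_on UNIV" "bounded (range f)" "\<omega> \<noteq> 0"
  obtains u where "transport_solution 0 \<omega> f u"
    and "\<exists>K. \<forall>x t. 0 \<le> t \<longrightarrow> \<bar>u x t\<bar> \<le> K * (1 + t)"
    and "(\<And>x. ((\<lambda>t. u x t) \<longlongrightarrow> 0) at_top) \<Longrightarrow> u = (\<lambda>_ _. 0)"
proof -
  obtain f' where f': "\<And>x. (f has_real_derivative f' x) (at x)" "continuous_on UNIV f'"
    using assms(1) by (auto simp: C1_differentiable_on_def has_real_derivative_iff_has_vector_derivative)
  then have "continuous_on UNIV f"
    by (intro continuous_at_imp_continuous_on) (auto intro: DERIV_isCont)
  obtain B where B: "\<And>x. \<bar>f x\<bar> \<le> B"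
    using assms(2) by (auto simp: bounded_iff)
  define u where "u x t = f x * (1 - cos (\<omega> * t)) / \<omega>" for x t
  have "transport_solution 0 \<omega> f u"
    unfolding transport_solution_def
  proof (intro conjI exI allI)
    fix x t
    show "((\<lambda>s. u s t) has_real_derivative f' x * (1 - cos (\<omega> * t)) / \<omega>) (at x)"
      unfolding u_def using assms(3) by (auto intro!: derivative_eq_intros f')
    show "((\<lambda>s. u x s) has_real_derivative f x * sin (\<omega> * t)) (at t)"
      unfolding u_def using assms(3) by (auto intro!: derivative_eq_intros)
  qed (use assms(3) in \<open>auto simp: u_def case_prod_unfold intro!: continuous_intros
      continuous_on_compose2[OF \<open>continuous_on UNIV f\<close>] continuous_on_compose2[OF f'(2)]\<close>)
  moreover have "\<bar>u x t\<bar> \<le> 2 * B / \<bar>\<omega>\<bar> * (1 + t)" if "0 \<le> t" for x t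
  proof -
    have "\<bar>1 - cos (\<omega> * t)\<bar> \<le> 2"
      using cos_ge_minus_one[of "\<omega> * t"] cos_le_one[of "\<omega> * t"] by linarith
    then have "\<bar>u x t\<bar> \<le> B * 2 / \<bar>\<omega>\<bar>"
      unfolding u_def using B[of x] by (simp add: abs_mult divide_right_mono mult_mono')
    also have "\<dots> \<le> 2 * B / \<bar>\<omega>\<bar> * (1 + t)"
      using abs_ge_zero[of "f x"] B[of x] that
      by (simp add: divide_right_mono mult_nonneg_nonneg algebra_simps)
    finally show ?thesis .
  qed
  moreover have "u = (\<lambda>_ _. 0)" if "\<And>x. ((\<lambda>t. u x t) \<longlongrightarrow> 0) at_top"
  proof (intro ext)
    fix x t
    show "u x t = 0"
    proof (rule periodic_tendsto_0_imp_0[OF that])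
      show "0 < 2 * pi / \<bar>\<omega>\<bar>" using assms(3) by simp
      show "u x (t + 2 * pi / \<bar>\<omega>\<bar>) = u x t" for t
        using sin_cos_add_period(2)[OF assms(3), of t 0] by (simp add: u_def)
    qed
  qed
  ultimately show ?thesis
    using that by blast
qed

lemma continuous_imp_has_antiderivative:
  fixes g :: "real \<Rightarrow> real"
  assumes "continuous_on UNIV g"
  obtains G where "\<And>x. (G has_real_derivative g x) (at x)"
proof -
  have "\<exists>G. \<forall>x::real. -\<infinity> < ereal x \<longrightarrow> ereal x < \<infinity> \<longrightarrow> (G has_vector_derivative g x) (at x)"
    by (rule einterval_antiderivative) (use assms in \<open>auto simp: continuous_on_eq_continuous_at\<close>)
  then show ?thesis
    using that by (auto simp: has_real_derivative_iff_has_vector_derivative)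
qed

(* Duhamel's formula, the integral over s from 0 to t of f (x - \<sigma> (t - s)) sin (\<omega> s), after the
   substitution \<xi> = x - \<sigma> (t - s); C and S are antiderivatives of f \<xi> cos (\<omega> \<xi> / \<sigma>) / \<sigma> and
   f \<xi> sin (\<omega> \<xi> / \<sigma>) / \<sigma>. *)
definition characteristic_solution ::
  "real \<Rightarrow> real \<Rightarrow> (real \<Rightarrow> real) \<Rightarrow> (real \<Rightarrow> real) \<Rightarrow> real \<Rightarrow> real \<Rightarrow> real" where
  "characteristic_solution \<sigma> \<omega> C S x t =
     sin (\<omega> * (t - x / \<sigma>)) * (C x - C (x - \<sigma> * t)) + cos (\<omega> * (t - x / \<sigma>)) * (S x - S (x - \<sigma> * t))"

lemma transport_solution_characteristic:
  assumes "\<sigma> \<noteq> 0" "continuous_on UNIV f"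
    and C: "\<And>\<xi>. (C has_real_derivative f \<xi> * cos (\<omega> * \<xi> / \<sigma>) / \<sigma>) (at \<xi>)"
    and S: "\<And>\<xi>. (S has_real_derivative f \<xi> * sin (\<omega> * \<xi> / \<sigma>) / \<sigma>) (at \<xi>)"
  shows "transport_solution \<sigma> \<omega> f (characteristic_solution \<sigma> \<omega> C S)"
proof -
  define fc where "fc \<xi> = f \<xi> * cos (\<omega> * \<xi> / \<sigma>) / \<sigma>" for \<xi>
  define fs where "fs \<xi> = f \<xi> * sin (\<omega> * \<xi> / \<sigma>) / \<sigma>" for \<xi>
  note C = C[folded fc_def] and S = S[folded fs_def]
  have "continuous_on UNIV fc" "continuous_on UNIV fs"
    unfolding fc_def fs_def using assms(1)
    by (auto intro!: continuous_intros continuous_on_compose2[OF assms(2)])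
  moreover have "continuous_on UNIV C" "continuous_on UNIV S"
    using C S by (auto intro!: continuous_at_imp_continuous_on DERIV_isCont)
  ultimately have cont: "continuous_on UNIV fc" "continuous_on UNIV fs" "continuous_on UNIV C"
    "continuous_on UNIV S" by blast+
  define \<theta> where "\<theta> x t = \<omega> * (t - x / \<sigma>)" for x t
  define ux where "ux x t = cos (\<theta> x t) * (- \<omega> / \<sigma>) * (C x - C (x - \<sigma> * t))
      + sin (\<theta> x t) * (fc x - fc (x - \<sigma> * t))
      - sin (\<theta> x t) * (- \<omega> / \<sigma>) * (S x - S (x - \<sigma> * t))
      + cos (\<theta> x t) * (fs x - fs (x - \<sigma> * t))" for x t
  define ut where "ut x t = cos (\<theta> x t) * \<omega> * (C x - C (x - \<sigma> * t))
      + sin (\<theta> x t) * (\<sigma> * fc (x - \<sigma> * t))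
      - sin (\<theta> x t) * \<omega> * (S x - S (x - \<sigma> * t))
      + cos (\<theta> x t) * (\<sigma> * fs (x - \<sigma> * t))" for x t
  show ?thesis
    unfolding transport_solution_def
  proof (intro conjI exI allI)
    fix x t
    show "((\<lambda>s. characteristic_solution \<sigma> \<omega> C S s t) has_real_derivative ux x t) (at x)"
      unfolding characteristic_solution_def ux_def \<theta>_def using assms(1)
      by (auto intro!: derivative_eq_intros DERIV_chain2[OF C] DERIV_chain2[OF S] C S simp: field_simps)
    show "((\<lambda>s. characteristic_solution \<sigma> \<omega> C S x s) has_real_derivative ut x t) (at t)"
      unfolding characteristic_solution_def ut_def \<theta>_def using assms(1)
      by (auto intro!: derivative_eq_intros DERIV_chain2[OF C] DERIV_chain2[OF S] simp: field_simps)
    have "ut x t + \<sigma> * ux x t = \<sigma> * (sin (\<theta> x t) * fc x + cos (\<theta> x t) * fs x)"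
      unfolding ut_def ux_def using assms(1) by (simp add: field_simps)
    also have "\<dots> = f x * sin (\<theta> x t + \<omega> * x / \<sigma>)"
      unfolding fc_def fs_def sin_add using assms(1) by (simp add: field_simps)
    also have "\<theta> x t + \<omega> * x / \<sigma> = \<omega> * t"
      unfolding \<theta>_def using assms(1) by (simp add: field_simps)
    finally show "ut x t + \<sigma> * ux x t = f x * sin (\<omega> * t)" .
  qed (use assms(1) in \<open>auto simp: characteristic_solution_def ux_def ut_def \<theta>_def case_prod_unfold
      intro!: continuous_intros continuous_on_compose2[OF cont(1)] continuous_on_compose2[OF cont(2)]
        continuous_on_compose2[OF cont(3)] continuous_on_compose2[OF cont(4)]\<close>)
qed

lemma characteristic_solution_linear_bound:
  assumes "\<sigma> \<noteq> 0" "\<And>\<xi>. \<bar>f \<xi>\<bar> \<le> B" "0 \<le> t"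
    and C: "\<And>\<xi>. (C has_real_derivative f \<xi> * cos (\<omega> * \<xi> / \<sigma>) / \<sigma>) (at \<xi>)"
    and S: "\<And>\<xi>. (S has_real_derivative f \<xi> * sin (\<omega> * \<xi> / \<sigma>) / \<sigma>) (at \<xi>)"
  shows "\<bar>characteristic_solution \<sigma> \<omega> C S x t\<bar> \<le> 2 * B * t"
proof -
  have Lipschitz: "\<bar>G x - G (x - \<sigma> * t)\<bar> \<le> B * t"
    if "\<And>\<xi>. (G has_real_derivative f \<xi> * h (\<omega> * \<xi> / \<sigma>) / \<sigma>) (at \<xi>)"
      "\<And>\<xi>. \<bar>h \<xi>\<bar> \<le> 1" for G h
  proof -
    have "\<bar>f \<xi> * h (\<omega> * \<xi> / \<sigma>) / \<sigma>\<bar> \<le> B / \<bar>\<sigma>\<bar>" for \<xi>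
      using mult_mono[OF assms(2) that(2) _ abs_ge_zero] abs_ge_zero[of "f \<xi>"] assms(2)[of \<xi>]
      by (simp add: abs_mult divide_right_mono)
    then have "norm (G x - G (x - \<sigma> * t)) \<le> B / \<bar>\<sigma>\<bar> * norm (x - (x - \<sigma> * t))"
      using that(1)
      by (intro field_differentiable_bound[where S=UNIV]) (auto intro: has_field_derivative_at_within)
    then show ?thesis
      using assms(1,3) by (simp add: abs_mult)
  qed
  have "\<bar>sin (\<omega> * (t - x / \<sigma>))\<bar> * \<bar>C x - C (x - \<sigma> * t)\<bar> \<le> 1 * (B * t)"
    "\<bar>cos (\<omega> * (t - x / \<sigma>))\<bar> * \<bar>S x - S (x - \<sigma> * t)\<bar> \<le> 1 * (B * t)"
    using Lipschitz[OF C abs_cos_le_one] Lipschitz[OF S abs_sin_le_one]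
    by (intro mult_mono abs_sin_le_one abs_cos_le_one; simp)+
  moreover have "\<bar>characteristic_solution \<sigma> \<omega> C S x t\<bar>
      \<le> \<bar>sin (\<omega> * (t - x / \<sigma>))\<bar> * \<bar>C x - C (x - \<sigma> * t)\<bar>
        + \<bar>cos (\<omega> * (t - x / \<sigma>))\<bar> * \<bar>S x - S (x - \<sigma> * t)\<bar>"
    unfolding characteristic_solution_def by (metis abs_mult abs_triangle_ineq)
  ultimately show ?thesis
    by linarith
qed

lemma characteristic_solution_decay:
  assumes "\<sigma> \<noteq> 0" "\<omega> \<noteq> 0"
    and decay: "\<And>x. ((\<lambda>t. characteristic_solution \<sigma> \<omega> C S x t) \<longlongrightarrow> 0) at_top"
  shows "characteristic_solution \<sigma> \<omega> C S = (\<lambda>_ _. 0)"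
proof -
  have "C y = C x \<and> S y = S x" for x y
  proof -
    \<comment> \<open>The difference of the solution at y and at x, taken along one characteristic, is periodic in t.\<close>
    define g where "g t = characteristic_solution \<sigma> \<omega> C S y (t + (y - x) / \<sigma>)
      - characteristic_solution \<sigma> \<omega> C S x t" for t
    define \<phi> where "\<phi> = - \<omega> * x / \<sigma>"
    have g_eq: "g t = sin (\<omega> * t + \<phi>) * (C y - C x) + cos (\<omega> * t + \<phi>) * (S y - S x)" for t
    proof -
      have "y - \<sigma> * (t + (y - x) / \<sigma>) = x - \<sigma> * t"
        "\<omega> * (t + (y - x) / \<sigma> - y / \<sigma>) = \<omega> * t + \<phi>" "\<omega> * (t - x / \<sigma>) = \<omega> * t + \<phi>"
        unfolding \<phi>_def using assms(1) by (simp_all add: field_simps)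
      note shift = this
      show ?thesis
        unfolding g_def characteristic_solution_def shift by (simp add: algebra_simps)
    qed
    have "filterlim (\<lambda>t. t + (y - x) / \<sigma>) at_top at_top"
      using filterlim_tendsto_add_at_top[OF tendsto_const filterlim_ident, of "(y - x) / \<sigma>"]
      by (simp add: add.commute)
    then have "(g \<longlongrightarrow> 0) at_top"
      unfolding g_def using tendsto_diff[OF filterlim_compose[OF decay] decay[of x]] by simp
    then have vanish: "g t = 0" for t
      by (rule periodic_tendsto_0_imp_0[of _ "2 * pi / \<bar>\<omega>\<bar>"])
         (use assms(2) sin_cos_add_period[OF assms(2)] in \<open>simp_all add: g_eq\<close>)
    have phase: "\<omega> * (x / \<sigma>) + \<phi> = 0" "\<omega> * (x / \<sigma> + pi / (2 * \<omega>)) + \<phi> = pi / 2"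
      unfolding \<phi>_def using assms by (simp_all add: field_simps)
    have "g (x / \<sigma>) = S y - S x" "g (x / \<sigma> + pi / (2 * \<omega>)) = C y - C x"
      unfolding g_eq phase by simp_all
    then show ?thesis
      using vanish by simp
  qed
  then show ?thesis
    unfolding characteristic_solution_def by (intro ext) (metis diff_self mult_zero_right add_0)
qed

lemma transport_solution_moving:
  assumes "continuous_on UNIV f" "bounded (range f)" "\<sigma> \<noteq> 0" "\<omega> \<noteq> 0"
  obtains u where "transport_solution \<sigma> \<omega> f u"
    and "\<exists>K. \<forall>x t. 0 \<le> t \<longrightarrow> \<bar>u x t\<bar> \<le> K * (1 + t)"
    and "(\<And>x. ((\<lambda>t. u x t) \<longlongrightarrow> 0) at_top) \<Longrightarrow> u = (\<lambda>_ _. 0)"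
proof -
  obtain B where B: "\<And>\<xi>. \<bar>f \<xi>\<bar> \<le> B"
    using assms(2) by (auto simp: bounded_iff)
  have cont: "continuous_on UNIV (\<lambda>\<xi>. f \<xi> * cos (\<omega> * \<xi> / \<sigma>) / \<sigma>)"
    "continuous_on UNIV (\<lambda>\<xi>. f \<xi> * sin (\<omega> * \<xi> / \<sigma>) / \<sigma>)"
    using assms(3) by (auto intro!: continuous_intros continuous_on_compose2[OF assms(1)])
  obtain C where C: "\<And>\<xi>. (C has_real_derivative f \<xi> * cos (\<omega> * \<xi> / \<sigma>) / \<sigma>) (at \<xi>)"
    using continuous_imp_has_antiderivative[OF cont(1)] by blast
  obtain S where S: "\<And>\<xi>. (S has_real_derivative f \<xi> * sin (\<omega> * \<xi> / \<sigma>) / \<sigma>) (at \<xi>)"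
    using continuous_imp_has_antiderivative[OF cont(2)] by blast
  have "\<bar>characteristic_solution \<sigma> \<omega> C S x t\<bar> \<le> 2 * B * (1 + t)" if "0 \<le> t" for x t
  proof -
    have "0 \<le> B" using abs_ge_zero[of "f 0"] B[of 0] by linarith
    then have "2 * B * t \<le> 2 * B * (1 + t)" by (simp add: mult_left_mono)
    with characteristic_solution_linear_bound[OF assms(3) B that C S, of x] show ?thesis by linarith
  qed
  with transport_solution_characteristic[OF assms(3,1) C S]
    characteristic_solution_decay[OF assms(3,4)] that
  show ?thesis by blast
qed

lemma transport_solution_exists:
  assumes "f C1_differentiable_on UNIV" "bounded (range f)"
  obtains u where "transport_solution \<sigma> \<omega> f u"
    and "\<exists>K. \<forall>x t. 0 \<le> t \<longrightarrow> \<bar>u x t\<bar> \<le> K * (1 + t)"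
    and "(\<And>x. ((\<lambda>t. u x t) \<longlongrightarrow> 0) at_top) \<Longrightarrow> u = (\<lambda>_ _. 0)"
proof -
  consider "\<omega> = 0" | "\<sigma> = 0" "\<omega> \<noteq> 0" | "\<sigma> \<noteq> 0" "\<omega> \<noteq> 0" by blast
  then show ?thesis
  proof cases
    case 1
    then have "transport_solution \<sigma> \<omega> f (\<lambda>_ _. 0)"
      unfolding transport_solution_def by (intro conjI exI[of _ "\<lambda>_ _. 0"]) auto
    then show ?thesis
      by (rule that[of "\<lambda>_ _. 0"]) (auto intro!: exI[of _ 0])
  next
    case 2
    with transport_solution_stationary[OF assms] that show ?thesis by blast
  next
    case 3
    with transport_solution_moving[OF C1_differentiable_imp_continuous_on[OF assms(1)] assms(2)] that
    show ?thesis by blast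
  qed
qed

section \<open>Plane waves and the phase space Z_2\<close>

definition acoustic_mode ::
  "real \<Rightarrow> real \<Rightarrow> real \<Rightarrow> real \<Rightarrow> real \<Rightarrow> real \<Rightarrow> real \<Rightarrow> real \<Rightarrow> real \<Rightarrow> real \<Rightarrow> real \<Rightarrow> bool"
  where
  "acoustic_mode U0 c0 rho0 k l m \<sigma> ax ay az ap \<longleftrightarrow>
     (U0 * k - \<sigma>) * ax + k * ap / rho0 = 0 \<and>
     (U0 * k - \<sigma>) * ay + l * ap / rho0 = 0 \<and>
     (U0 * k - \<sigma>) * az + m * ap / rho0 = 0 \<and>
     (U0 * k - \<sigma>) * ap + rho0 * c0\<^sup>2 * (k * ax + l * ay + m * az) = 0"

lemma has_partials_plane_wave:
  assumes "\<And>x t. ((\<lambda>s. u s t) has_real_derivative ux x t) (at x)"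
    and "\<And>x t. ((\<lambda>s. u x s) has_real_derivative ut x t) (at t)"
    and "continuous_on UNIV (\<lambda>(x, t). u x t)" "continuous_on UNIV (\<lambda>(x, t). ux x t)"
      "continuous_on UNIV (\<lambda>(x, t). ut x t)"
  shows "has_partials (\<lambda>x y z t. u (k * x + l * y + m * z) t)
    (\<lambda>x y z t. ux (k * x + l * y + m * z) t * k) (\<lambda>x y z t. ux (k * x + l * y + m * z) t * l)
    (\<lambda>x y z t. ux (k * x + l * y + m * z) t * m) (\<lambda>x y z t. ut (k * x + l * y + m * z) t)"
proof -
  have cont: "continuous_field (\<lambda>x y z t. g (k * x + l * y + m * z) t)"
    if "continuous_on UNIV (\<lambda>(x, t). g x t)" for g
  proof -
    have "continuous_on UNIV ((\<lambda>(x, t). g x t) \<circ>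
        (\<lambda>v. (k * fst v + l * fst (snd v) + m * fst (snd (snd v)), snd (snd (snd v)))))"
      by (rule continuous_on_compose[OF _ continuous_on_subset[OF that]]) (auto intro!: continuous_intros)
    then show ?thesis
      by (simp add: continuous_field_def o_def)
  qed
  show ?thesis
    unfolding has_partials_def
  proof (intro conjI allI)
    fix x y z t
    show "((\<lambda>s. u (k * s + l * y + m * z) t) has_real_derivative ux (k * x + l * y + m * z) t * k) (at x)"
      "((\<lambda>s. u (k * x + l * s + m * z) t) has_real_derivative ux (k * x + l * y + m * z) t * l) (at y)"
      "((\<lambda>s. u (k * x + l * y + m * s) t) has_real_derivative ux (k * x + l * y + m * z) t * m) (at z)"
      by (rule DERIV_chain2[OF assms(1)]; auto intro!: derivative_eq_intros)+
    show "((\<lambda>s. u (k * x + l * y + m * z) s) has_real_derivative ut (k * x + l * y + m * z) t) (at t)"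
      by (rule assms(2))
  qed (intro continuous_field_intros cont assms(3-5))+
qed

lemma acoustic_system_plane_wave:
  assumes mode: "acoustic_mode U0 c0 rho0 k l m \<sigma> ax ay az ap"
    and sol: "transport_solution \<sigma> \<omega> f u"
  shows "acoustic_system U0 c0 rho0
    (\<lambda>x y z t. ax * u (k * x + l * y + m * z) t) (\<lambda>x y z t. ay * u (k * x + l * y + m * z) t)
    (\<lambda>x y z t. az * u (k * x + l * y + m * z) t) (\<lambda>x y z t. ap * u (k * x + l * y + m * z) t)
    (\<lambda>x y z t. ax * (f (k * x + l * y + m * z) * sin (\<omega> * t)))
    (\<lambda>x y z t. ay * (f (k * x + l * y + m * z) * sin (\<omega> * t)))
    (\<lambda>x y z t. az * (f (k * x + l * y + m * z) * sin (\<omega> * t)))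
    (\<lambda>x y z t. ap * (f (k * x + l * y + m * z) * sin (\<omega> * t)))"
proof -
  obtain ux ut where
    der: "\<And>x t. ((\<lambda>s. u s t) has_real_derivative ux x t) (at x)"
      "\<And>x t. ((\<lambda>s. u x s) has_real_derivative ut x t) (at t)"
    and transport: "\<And>x t. ut x t + \<sigma> * ux x t = f x * sin (\<omega> * t)"
    and cont: "continuous_on UNIV (\<lambda>(x, t). u x t)" "continuous_on UNIV (\<lambda>(x, t). ux x t)"
      "continuous_on UNIV (\<lambda>(x, t). ut x t)"
    using sol unfolding transport_solution_def by blast
  note amplitude = has_partials_C1_4[OF has_partials_cmult[OF has_partials_plane_wave[OF der cont]]]
  have ut_eq: "ut \<xi> t = f \<xi> * sin (\<omega> * t) - \<sigma> * ux \<xi> t" for \<xi> t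
    using transport[of \<xi> t] by linarith
  have velocity_residual: "a * ut \<xi> t + U0 * (a * (ux \<xi> t * k)) + 1 / rho0 * (ap * (ux \<xi> t * n))
      = a * (f \<xi> * sin (\<omega> * t)) + ux \<xi> t * ((U0 * k - \<sigma>) * a + n * ap / rho0)" for a n \<xi> t
    unfolding ut_eq by (simp add: algebra_simps)
  have pressure_residual: "ap * ut \<xi> t + U0 * (ap * (ux \<xi> t * k))
        + rho0 * c0\<^sup>2 * (ax * (ux \<xi> t * k) + ay * (ux \<xi> t * l) + az * (ux \<xi> t * m))
      = ap * (f \<xi> * sin (\<omega> * t))
        + ux \<xi> t * ((U0 * k - \<sigma>) * ap + rho0 * c0\<^sup>2 * (k * ax + l * ay + m * az))" for \<xi> t
    unfolding ut_eq by (simp add: algebra_simps)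
  show ?thesis
    unfolding acoustic_system_def amplitude velocity_residual pressure_residual
    using mode by (simp add: acoustic_mode_def amplitude(1))
qed

(* Modes 1 and 2 are sound
   waves, modes 3 and 4 are vortical waves carried by the flow. *)
definition Z2_ax :: "(nat \<Rightarrow> real) \<Rightarrow> (nat \<Rightarrow> real) \<Rightarrow> (nat \<Rightarrow> real) \<Rightarrow> nat \<Rightarrow> real" where
  "Z2_ax k l m i = (if i = 3 then l 3 / k 3 else if i = 4 then m 4 / k 4 else k i)"

definition Z2_ay :: "(nat \<Rightarrow> real) \<Rightarrow> nat \<Rightarrow> real" where
  "Z2_ay l i = (if i = 3 then -1 else if i = 4 then 0 else l i)"

definition Z2_az :: "(nat \<Rightarrow> real) \<Rightarrow> nat \<Rightarrow> real" where
  "Z2_az m i = (if i = 3 then 0 else if i = 4 then -1 else m i)"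

definition Z2_ap :: "real \<Rightarrow> real \<Rightarrow> (nat \<Rightarrow> real) \<Rightarrow> (nat \<Rightarrow> real) \<Rightarrow> (nat \<Rightarrow> real) \<Rightarrow> nat \<Rightarrow> real" where
  "Z2_ap c0 rho0 k l m i =
     (if i = 1 then - c0 * rho0 * r_coef k l m 1 else if i = 2 then c0 * rho0 * r_coef k l m 2 else 0)"

definition Z2_speed :: "real \<Rightarrow> real \<Rightarrow> (nat \<Rightarrow> real) \<Rightarrow> (nat \<Rightarrow> real) \<Rightarrow> (nat \<Rightarrow> real) \<Rightarrow> nat \<Rightarrow> real" where
  "Z2_speed U0 c0 k l m i =
     U0 * k i + (if i = 1 then - c0 * r_coef k l m 1 else if i = 2 then c0 * r_coef k l m 2 else 0)"

definition modal_sum ::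
  "(nat \<Rightarrow> real) \<Rightarrow> (nat \<Rightarrow> real) \<Rightarrow> (nat \<Rightarrow> real) \<Rightarrow> (nat \<Rightarrow> real) \<Rightarrow> (nat \<Rightarrow> real \<Rightarrow> real)
    \<Rightarrow> real \<Rightarrow> real \<Rightarrow> real \<Rightarrow> real" where
  "modal_sum a k l m g x y z = (\<Sum>i\<in>{1..4}. a i * g i (k i * x + l i * y + m i * z))"

lemma sum_atLeastAtMost_1_4: "(\<Sum>i\<in>{1..4::nat}. g i) = g 1 + g 2 + g 3 + g 4"
  by (simp add: eval_nat_numeral)

lemma atLeastAtMost_1_4_cases:
  assumes "i \<in> {1..4::nat}"
  obtains "i = 1" | "i = 2" | "i = 3" | "i = 4"
  using assms by force

lemma Z2_acoustic_mode:
  assumes "0 < rho0" "k 3 \<noteq> 0" "k 4 \<noteq> 0" "i \<in> {1..4}"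
  shows "acoustic_mode U0 c0 rho0 (k i) (l i) (m i) (Z2_speed U0 c0 k l m i)
    (Z2_ax k l m i) (Z2_ay l i) (Z2_az m i) (Z2_ap c0 rho0 k l m i)"
proof -
  have r: "r_coef k l m j * r_coef k l m j = k j * k j + l j * l j + m j * m j" for j
    unfolding r_coef_def by (simp add: power2_eq_square)
  from assms(4) show ?thesis
    by (cases rule: atLeastAtMost_1_4_cases)
       (use assms(1-3) r[of 1] r[of 2] in \<open>simp_all add: acoustic_mode_def Z2_ax_def Z2_ay_def Z2_az_def
          Z2_ap_def Z2_speed_def power2_eq_square field_simps\<close>)
qed

(* Delta_Z2 \<noteq> 0 makes the four amplitude vectors linearly independent. *)
lemma Z2_coordinate_functional:
  assumes "k 3 \<noteq> 0" "k 4 \<noteq> 0" "Delta_Z2 c0 rho0 k l m \<noteq> 0" "i \<in> {1..4}"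
  obtains \<alpha> \<beta> \<gamma> \<delta> where
    "\<And>g. g i = \<alpha> * (\<Sum>j\<in>{1..4}. Z2_ax k l m j * g j) + \<beta> * (\<Sum>j\<in>{1..4}. Z2_ay l j * g j)
             + \<gamma> * (\<Sum>j\<in>{1..4}. Z2_az m j * g j) + \<delta> * (\<Sum>j\<in>{1..4}. Z2_ap c0 rho0 k l m j * g j)"
proof -
  define X where "X g = (\<Sum>j\<in>{1..4}. Z2_ax k l m j * g j)" for g :: "nat \<Rightarrow> real"
  define Y where "Y g = (\<Sum>j\<in>{1..4}. Z2_ay l j * g j)" for g :: "nat \<Rightarrow> real"
  define Z where "Z g = (\<Sum>j\<in>{1..4}. Z2_az m j * g j)" for g :: "nat \<Rightarrow> real"
  define P where "P g = (\<Sum>j\<in>{1..4}. Z2_ap c0 rho0 k l m j * g j)" for g :: "nat \<Rightarrow> real"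
  define D where "D = Delta_Z2 c0 rho0 k l m"
  define a1 where "a1 = k 1 + l 3 * l 1 / k 3 + m 4 * m 1 / k 4"
  define a2 where "a2 = k 2 + l 3 * l 2 / k 3 + m 4 * m 2 / k 4"
  define r1 where "r1 = c0 * rho0 * r_coef k l m 1"
  define r2 where "r2 = c0 * rho0 * r_coef k l m 2"
  have D: "D = r1 * a2 + r2 * a1" "D \<noteq> 0"
    using assms(1-3) by (simp_all add: D_def Delta_Z2_def a1_def a2_def r1_def r2_def field_simps)
  have XYZ: "X g + l 3 / k 3 * Y g + m 4 / k 4 * Z g = a1 * g 1 + a2 * g 2" for g
    unfolding X_def Y_def Z_def sum_atLeastAtMost_1_4
    using assms(1,2) by (simp add: a1_def a2_def Z2_ax_def Z2_ay_def Z2_az_def field_simps)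
  have P: "P g = - r1 * g 1 + r2 * g 2" for g
    unfolding P_def sum_atLeastAtMost_1_4 by (simp add: r1_def r2_def Z2_ap_def)
  have g1: "g 1 = r2 / D * X g + r2 / D * (l 3 / k 3) * Y g + r2 / D * (m 4 / k 4) * Z g
      - a2 / D * P g" for g
  proof -
    have "r2 / D * X g + r2 / D * (l 3 / k 3) * Y g + r2 / D * (m 4 / k 4) * Z g - a2 / D * P g
        = (r2 * (a1 * g 1 + a2 * g 2) - a2 * (- r1 * g 1 + r2 * g 2)) / D"
      unfolding XYZ[symmetric] P using D(2) by (simp add: field_simps)
    also have "\<dots> = g 1"
      using D by (simp add: field_simps)
    finally show ?thesis ..
  qed
  have g2: "g 2 = r1 / D * X g + r1 / D * (l 3 / k 3) * Y g + r1 / D * (m 4 / k 4) * Z g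
      + a1 / D * P g" for g
  proof -
    have "r1 / D * X g + r1 / D * (l 3 / k 3) * Y g + r1 / D * (m 4 / k 4) * Z g + a1 / D * P g
        = (r1 * (a1 * g 1 + a2 * g 2) + a1 * (- r1 * g 1 + r2 * g 2)) / D"
      unfolding XYZ[symmetric] P using D(2) by (simp add: field_simps)
    also have "\<dots> = g 2"
      using D by (simp add: field_simps)
    finally show ?thesis ..
  qed
  have g3: "g 3 = l 1 * g 1 + l 2 * g 2 - Y g" and g4: "g 4 = m 1 * g 1 + m 2 * g 2 - Z g" for g
    unfolding Y_def Z_def sum_atLeastAtMost_1_4 by (simp_all add: Z2_ay_def Z2_az_def)
  have "\<exists>\<alpha> \<beta> \<gamma> \<delta>. \<forall>g. g i = \<alpha> * X g + \<beta> * Y g + \<gamma> * Z g + \<delta> * P g"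
    using assms(4)
  proof (cases rule: atLeastAtMost_1_4_cases)
    case 1
    have "\<forall>g. g i = r2 / D * X g + r2 / D * (l 3 / k 3) * Y g + r2 / D * (m 4 / k 4) * Z g
        + - a2 / D * P g"
      using g1 by (simp add: 1)
    then show ?thesis by blast
  next
    case 2
    have "\<forall>g. g i = r1 / D * X g + r1 / D * (l 3 / k 3) * Y g + r1 / D * (m 4 / k 4) * Z g
        + a1 / D * P g"
      using g2 by (simp add: 2)
    then show ?thesis by blast
  next
    case 3
    have "g i = (l 1 * r2 + l 2 * r1) / D * X g + ((l 1 * r2 + l 2 * r1) / D * (l 3 / k 3) - 1) * Y g
        + (l 1 * r2 + l 2 * r1) / D * (m 4 / k 4) * Z g + (l 2 * a1 - l 1 * a2) / D * P g" for g
      unfolding 3 g3[of g] g1[of g] g2[of g]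
      by (simp add: algebra_simps add_divide_distrib diff_divide_distrib)
    then show ?thesis by blast
  next
    case 4
    have "g i = (m 1 * r2 + m 2 * r1) / D * X g + (m 1 * r2 + m 2 * r1) / D * (l 3 / k 3) * Y g
        + ((m 1 * r2 + m 2 * r1) / D * (m 4 / k 4) - 1) * Z g + (m 2 * a1 - m 1 * a2) / D * P g" for g
      unfolding 4 g4[of g] g1[of g] g2[of g]
      by (simp add: algebra_simps add_divide_distrib diff_divide_distrib)
    then show ?thesis by blast
  qed
  then show ?thesis
    using that unfolding X_def Y_def Z_def P_def by blast
qed

lemma modal_sum_coordinate:
  assumes "k 3 \<noteq> 0" "k 4 \<noteq> 0" "Delta_Z2 c0 rho0 k l m \<noteq> 0" "i \<in> {1..4}" "k i \<noteq> 0"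
  obtains \<alpha> \<beta> \<gamma> \<delta> where
    "\<And>g \<xi>. g i \<xi> = \<alpha> * modal_sum (Z2_ax k l m) k l m g (\<xi> / k i) 0 0
       + \<beta> * modal_sum (Z2_ay l) k l m g (\<xi> / k i) 0 0 + \<gamma> * modal_sum (Z2_az m) k l m g (\<xi> / k i) 0 0
       + \<delta> * modal_sum (Z2_ap c0 rho0 k l m) k l m g (\<xi> / k i) 0 0"
proof -
  obtain \<alpha> \<beta> \<gamma> \<delta> where coord: "\<And>g. g i = \<alpha> * (\<Sum>j\<in>{1..4}. Z2_ax k l m j * g j)
      + \<beta> * (\<Sum>j\<in>{1..4}. Z2_ay l j * g j) + \<gamma> * (\<Sum>j\<in>{1..4}. Z2_az m j * g j)
      + \<delta> * (\<Sum>j\<in>{1..4}. Z2_ap c0 rho0 k l m j * g j)"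
    using Z2_coordinate_functional[OF assms(1-4)] by blast
  show ?thesis
    by (rule that[of \<alpha> \<beta> \<gamma> \<delta>])
       (use coord[of "\<lambda>j. g j (k j * (\<xi> / k i))" for g \<xi>] assms(5) in \<open>simp add: modal_sum_def\<close>)
qed

lemma in_Z2_modal_form:
  assumes "\<And>i. i \<in> {1..4} \<Longrightarrow> k i \<noteq> 0" "Delta_Z2 c0 rho0 k l m \<noteq> 0"
    and "in_Z2 c0 rho0 k l m F G H P"
  obtains f where "\<And>i. i \<in> {1..4} \<Longrightarrow> f i C1_differentiable_on UNIV"
    and "\<And>i. i \<in> {1..4} \<Longrightarrow> bounded (range (f i))"
    and "F = modal_sum (Z2_ax k l m) k l m f" "G = modal_sum (Z2_ay l) k l m f"
      "H = modal_sum (Z2_az m) k l m f" "P = modal_sum (Z2_ap c0 rho0 k l m) k l m f"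
proof -
  obtain f :: "nat \<Rightarrow> real \<Rightarrow> real" where C1: "\<forall>i\<in>{1..4}. f i C1_differentiable_on UNIV"
    and rep: "\<forall>x y z. let \<xi> = (\<lambda>i. k i * x + l i * y + m i * z) in
           F x y z = k 1 * f 1 (\<xi> 1) + k 2 * f 2 (\<xi> 2) + l 3 / k 3 * f 3 (\<xi> 3) + m 4 / k 4 * f 4 (\<xi> 4) \<and>
           G x y z = l 1 * f 1 (\<xi> 1) + l 2 * f 2 (\<xi> 2) - f 3 (\<xi> 3) \<and>
           H x y z = m 1 * f 1 (\<xi> 1) + m 2 * f 2 (\<xi> 2) - f 4 (\<xi> 4) \<and>
           P x y z = - c0 * rho0 * r_coef k l m 1 * f 1 (\<xi> 1) + c0 * rho0 * r_coef k l m 2 * f 2 (\<xi> 2)"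
    using assms(3) unfolding in_Z2_def by blast
  have modal: "F = modal_sum (Z2_ax k l m) k l m f" "G = modal_sum (Z2_ay l) k l m f"
      "H = modal_sum (Z2_az m) k l m f" "P = modal_sum (Z2_ap c0 rho0 k l m) k l m f"
    using rep unfolding modal_sum_def sum_atLeastAtMost_1_4
    by (auto simp: Let_def Z2_ax_def Z2_ay_def Z2_az_def Z2_ap_def fun_eq_iff)
  obtain B where B: "\<And>x y z. \<bar>F x y z\<bar> \<le> B \<and> \<bar>G x y z\<bar> \<le> B \<and> \<bar>H x y z\<bar> \<le> B \<and> \<bar>P x y z\<bar> \<le> B"
  proof -
    have "bounded (range (\<lambda>(x, y, z). F x y z) \<union> range (\<lambda>(x, y, z). G x y z)
        \<union> range (\<lambda>(x, y, z). H x y z) \<union> range (\<lambda>(x, y, z). P x y z))"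
      using assms(3) unfolding in_Z2_def by simp
    then obtain B where "\<forall>v\<in>range (\<lambda>(x, y, z). F x y z) \<union> range (\<lambda>(x, y, z). G x y z)
        \<union> range (\<lambda>(x, y, z). H x y z) \<union> range (\<lambda>(x, y, z). P x y z). \<bar>v\<bar> \<le> B"
      unfolding bounded_iff real_norm_def by blast
    then show ?thesis
      using that[of B] by (metis (no_types, lifting) UnCI case_prod_conv rangeI)
  qed
  have "bounded (range (f i))" if i: "i \<in> {1..4}" for i
  proof -
    have "k 3 \<noteq> 0" "k 4 \<noteq> 0" "k i \<noteq> 0" using assms(1) i by auto
    then obtain \<alpha> \<beta> \<gamma> \<delta> where "\<And>g \<xi>. g i \<xi> = \<alpha> * modal_sum (Z2_ax k l m) k l m g (\<xi> / k i) 0 0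
       + \<beta> * modal_sum (Z2_ay l) k l m g (\<xi> / k i) 0 0 + \<gamma> * modal_sum (Z2_az m) k l m g (\<xi> / k i) 0 0
       + \<delta> * modal_sum (Z2_ap c0 rho0 k l m) k l m g (\<xi> / k i) 0 0"
      using modal_sum_coordinate[OF _ _ assms(2) i] by blast
    from this[of f] have coord: "f i \<xi> = \<alpha> * F (\<xi> / k i) 0 0 + \<beta> * G (\<xi> / k i) 0 0
        + \<gamma> * H (\<xi> / k i) 0 0 + \<delta> * P (\<xi> / k i) 0 0" for \<xi>
      unfolding modal .
    have "\<bar>f i \<xi>\<bar> \<le> (\<bar>\<alpha>\<bar> + \<bar>\<beta>\<bar> + \<bar>\<gamma>\<bar> + \<bar>\<delta>\<bar>) * B" for \<xi>
      unfolding coord distrib_right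
      using B[of "\<xi> / k i" 0 0]
      by (intro order.trans[OF abs_triangle_ineq] add_mono order.trans[OF abs_triangle_ineq4]) 
         (auto simp: abs_mult intro!: mult_left_mono)
    then show ?thesis
      unfolding bounded_iff by auto
  qed
  with C1 modal that show ?thesis by blast
qed

lemma acoustic_system_Z2_superposition:
  assumes "0 < rho0" "k 3 \<noteq> 0" "k 4 \<noteq> 0"
    and "\<And>i. i \<in> {1..4} \<Longrightarrow> transport_solution (Z2_speed U0 c0 k l m i) \<omega> (f i) (u i)"
  shows "acoustic_system U0 c0 rho0
    (\<lambda>x y z t. modal_sum (Z2_ax k l m) k l m (\<lambda>i \<xi>. u i \<xi> t) x y z)
    (\<lambda>x y z t. modal_sum (Z2_ay l) k l m (\<lambda>i \<xi>. u i \<xi> t) x y z)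
    (\<lambda>x y z t. modal_sum (Z2_az m) k l m (\<lambda>i \<xi>. u i \<xi> t) x y z)
    (\<lambda>x y z t. modal_sum (Z2_ap c0 rho0 k l m) k l m (\<lambda>i \<xi>. u i \<xi> t) x y z)
    (\<lambda>x y z t. modal_sum (Z2_ax k l m) k l m f x y z * sin (\<omega> * t))
    (\<lambda>x y z t. modal_sum (Z2_ay l) k l m f x y z * sin (\<omega> * t))
    (\<lambda>x y z t. modal_sum (Z2_az m) k l m f x y z * sin (\<omega> * t))
    (\<lambda>x y z t. modal_sum (Z2_ap c0 rho0 k l m) k l m f x y z * sin (\<omega> * t))"
proof -
  have "acoustic_system U0 c0 rho0
    (\<lambda>x y z t. \<Sum>i\<in>{1..4}. Z2_ax k l m i * u i (k i * x + l i * y + m i * z) t)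
    (\<lambda>x y z t. \<Sum>i\<in>{1..4}. Z2_ay l i * u i (k i * x + l i * y + m i * z) t)
    (\<lambda>x y z t. \<Sum>i\<in>{1..4}. Z2_az m i * u i (k i * x + l i * y + m i * z) t)
    (\<lambda>x y z t. \<Sum>i\<in>{1..4}. Z2_ap c0 rho0 k l m i * u i (k i * x + l i * y + m i * z) t)
    (\<lambda>x y z t. \<Sum>i\<in>{1..4}. Z2_ax k l m i * (f i (k i * x + l i * y + m i * z) * sin (\<omega> * t)))
    (\<lambda>x y z t. \<Sum>i\<in>{1..4}. Z2_ay l i * (f i (k i * x + l i * y + m i * z) * sin (\<omega> * t)))
    (\<lambda>x y z t. \<Sum>i\<in>{1..4}. Z2_az m i * (f i (k i * x + l i * y + m i * z) * sin (\<omega> * t)))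
    (\<lambda>x y z t. \<Sum>i\<in>{1..4}. Z2_ap c0 rho0 k l m i * (f i (k i * x + l i * y + m i * z) * sin (\<omega> * t)))"
    using assms by (intro acoustic_system_sum acoustic_system_plane_wave) (auto intro!: Z2_acoustic_mode)
  then show ?thesis
    by (simp add: modal_sum_def sum_distrib_right mult.assoc)
qed

lemma transport_solution_family:
  assumes "\<And>i. i \<in> I \<Longrightarrow> f i C1_differentiable_on UNIV" "\<And>i. i \<in> I \<Longrightarrow> bounded (range (f i))"
  obtains u :: "'i \<Rightarrow> real \<Rightarrow> real \<Rightarrow> real" and K :: "'i \<Rightarrow> real"
  where "\<And>i. i \<in> I \<Longrightarrow> transport_solution (\<sigma> i) \<omega> (f i) (u i)"
    and "\<And>i \<xi> t. i \<in> I \<Longrightarrow> 0 \<le> t \<Longrightarrow> \<bar>u i \<xi> t\<bar> \<le> K i * (1 + t)"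
    and "\<And>i. i \<in> I \<Longrightarrow> (\<And>\<xi>. ((\<lambda>t. u i \<xi> t) \<longlongrightarrow> 0) at_top) \<Longrightarrow> u i = (\<lambda>_ _. 0)"
proof -
  have "\<forall>i\<in>I. \<exists>ui. transport_solution (\<sigma> i) \<omega> (f i) ui \<and>
      (\<exists>K. \<forall>\<xi> t. 0 \<le> t \<longrightarrow> \<bar>ui \<xi> t\<bar> \<le> K * (1 + t)) \<and>
      ((\<forall>\<xi>. ((\<lambda>t. ui \<xi> t) \<longlongrightarrow> 0) at_top) \<longrightarrow> ui = (\<lambda>_ _. 0))"
    (is "\<forall>i\<in>I. \<exists>ui. ?P i ui")
  proof
    fix i assume "i \<in> I"
    from transport_solution_exists[OF assms(1,2)[OF this]] show "\<exists>ui. ?P i ui" by metis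
  qed
  then obtain u where u: "\<And>i. i \<in> I \<Longrightarrow> ?P i (u i)"
    by (metis bchoice)
  then obtain K where "\<And>i \<xi> t. i \<in> I \<Longrightarrow> 0 \<le> t \<Longrightarrow> \<bar>u i \<xi> t\<bar> \<le> K i * (1 + t)"
    by (metis bchoice)
  with u that show ?thesis by blast
qed

definition Z2_mode_decomposition ::
  "real \<Rightarrow> real \<Rightarrow> (nat \<Rightarrow> real) \<Rightarrow> (nat \<Rightarrow> real) \<Rightarrow> (nat \<Rightarrow> real) \<Rightarrow> (nat \<Rightarrow> real \<Rightarrow> real \<Rightarrow> real)
    \<Rightarrow> field \<Rightarrow> field \<Rightarrow> field \<Rightarrow> field \<Rightarrow> bool" where
  "Z2_mode_decomposition c0 rho0 k l m u vx vy vz p \<longleftrightarrow>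
     (\<forall>x y z t. 0 \<le> t \<longrightarrow>
        vx x y z t = modal_sum (Z2_ax k l m) k l m (\<lambda>i \<xi>. u i \<xi> t) x y z \<and>
        vy x y z t = modal_sum (Z2_ay l) k l m (\<lambda>i \<xi>. u i \<xi> t) x y z \<and>
        vz x y z t = modal_sum (Z2_az m) k l m (\<lambda>i \<xi>. u i \<xi> t) x y z \<and>
        p x y z t = modal_sum (Z2_ap c0 rho0 k l m) k l m (\<lambda>i \<xi>. u i \<xi> t) x y z)"

lemma Z2_solution_mode_decomposition:
  assumes "0 < c0" "0 < rho0" "\<And>i. i \<in> {1..4} \<Longrightarrow> k i \<noteq> 0" "Delta_Z2 c0 rho0 k l m \<noteq> 0"
    and "in_Z2 c0 rho0 k l m F G H P" "is_solution U0 c0 rho0 \<omega> F G H P vx vy vz p"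
  obtains u :: "nat \<Rightarrow> real \<Rightarrow> real \<Rightarrow> real" and K :: "nat \<Rightarrow> real"
  where "\<And>i \<xi> t. i \<in> {1..4} \<Longrightarrow> 0 \<le> t \<Longrightarrow> \<bar>u i \<xi> t\<bar> \<le> K i * (1 + t)"
    and "\<And>i. i \<in> {1..4} \<Longrightarrow> (\<And>\<xi>. ((\<lambda>t. u i \<xi> t) \<longlongrightarrow> 0) at_top) \<Longrightarrow> u i = (\<lambda>_ _. 0)"
    and "Z2_mode_decomposition c0 rho0 k l m u vx vy vz p"
proof -
  obtain f where C1: "\<And>i. i \<in> {1..4} \<Longrightarrow> f i C1_differentiable_on UNIV"
    and bounded: "\<And>i. i \<in> {1..4} \<Longrightarrow> bounded (range (f i))"
    and modal: "F = modal_sum (Z2_ax k l m) k l m f" "G = modal_sum (Z2_ay l) k l m f"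
      "H = modal_sum (Z2_az m) k l m f" "P = modal_sum (Z2_ap c0 rho0 k l m) k l m f"
    using in_Z2_modal_form[OF assms(3-5)] by blast
  show ?thesis
  proof (rule transport_solution_family[where \<sigma>="Z2_speed U0 c0 k l m" and \<omega>=\<omega>, OF C1 bounded])
    fix u K
    assume sol: "\<And>i. i \<in> {1..4} \<Longrightarrow> transport_solution (Z2_speed U0 c0 k l m i) \<omega> (f i) (u i)"
      and bound: "\<And>i \<xi> t. i \<in> {1..4} \<Longrightarrow> 0 \<le> t \<Longrightarrow> \<bar>u i \<xi> t\<bar> \<le> K i * (1 + t)"
      and vanish: "\<And>i. i \<in> {1..4} \<Longrightarrow> (\<And>\<xi>. ((\<lambda>t. u i \<xi> t) \<longlongrightarrow> 0) at_top) \<Longrightarrow> u i = (\<lambda>_ _. 0)"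
    have superposition: "acoustic_system U0 c0 rho0
      (\<lambda>x y z t. modal_sum (Z2_ax k l m) k l m (\<lambda>i \<xi>. u i \<xi> t) x y z)
      (\<lambda>x y z t. modal_sum (Z2_ay l) k l m (\<lambda>i \<xi>. u i \<xi> t) x y z)
      (\<lambda>x y z t. modal_sum (Z2_az m) k l m (\<lambda>i \<xi>. u i \<xi> t) x y z)
      (\<lambda>x y z t. modal_sum (Z2_ap c0 rho0 k l m) k l m (\<lambda>i \<xi>. u i \<xi> t) x y z)
      (\<lambda>x y z t. F x y z * sin (\<omega> * t)) (\<lambda>x y z t. G x y z * sin (\<omega> * t))
      (\<lambda>x y z t. H x y z * sin (\<omega> * t)) (\<lambda>x y z t. P x y z * sin (\<omega> * t))"
      unfolding modal using assms(2,3) sol by (intro acoustic_system_Z2_superposition) auto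
    have "modal_sum a k l m (\<lambda>i \<xi>. u i \<xi> 0) x y z = 0" for a x y z
      using sol unfolding modal_sum_def transport_solution_def by simp
    then have "vx x y z 0 = modal_sum (Z2_ax k l m) k l m (\<lambda>i \<xi>. u i \<xi> 0) x y z \<and>
        vy x y z 0 = modal_sum (Z2_ay l) k l m (\<lambda>i \<xi>. u i \<xi> 0) x y z \<and>
        vz x y z 0 = modal_sum (Z2_az m) k l m (\<lambda>i \<xi>. u i \<xi> 0) x y z \<and>
        p x y z 0 = modal_sum (Z2_ap c0 rho0 k l m) k l m (\<lambda>i \<xi>. u i \<xi> 0) x y z" for x y z
      using assms(6) unfolding is_solution_def by simp
    then have "Z2_mode_decomposition c0 rho0 k l m u vx vy vz p"
      unfolding Z2_mode_decomposition_def
      using acoustic_system_unique[OF assms(1,2) is_solution_acoustic_system[OF assms(6)] superposition]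
      by blast
    with bound vanish show ?thesis
      by (rule that)
  qed
qed

section \<open>Exponential growth rates\<close>

lemma Limsup_ln_div_le_0:
  fixes g :: "real \<Rightarrow> real"
  assumes bound: "\<And>t. 0 \<le> t \<Longrightarrow> \<bar>g t\<bar> \<le> K * (1 + t)"
  shows "Limsup at_top (\<lambda>t. ereal (ln \<bar>g t\<bar> / t)) \<le> 0"
proof -
  define K' where "K' = max K 1"
  have "K' \<ge> 1" by (simp add: K'_def)
  have "\<forall>\<^sub>F t in at_top. ereal (ln \<bar>g t\<bar> / t) \<le> ereal (ln (2 * K') / t + ln t / t)"
  proof (rule eventually_mono[OF eventually_ge_at_top[of 1]])
    fix t :: real assume "1 \<le> t"
    have "1 * 1 \<le> K' * (1 + t)"
      using \<open>K' \<ge> 1\<close> \<open>1 \<le> t\<close> by (intro mult_mono) auto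
    have "ln \<bar>g t\<bar> \<le> ln (K' * (1 + t))"
    proof (cases "g t = 0")
      case False
      have "K * (1 + t) \<le> K' * (1 + t)"
        using \<open>1 \<le> t\<close> by (intro mult_right_mono) (auto simp: K'_def)
      then have "\<bar>g t\<bar> \<le> K' * (1 + t)"
        using bound[of t] \<open>1 \<le> t\<close> by linarith
      with False show ?thesis by simp
    qed (use \<open>1 * 1 \<le> K' * (1 + t)\<close> in simp)
    also have "\<dots> \<le> ln (K' * (2 * t))"
      using \<open>1 * 1 \<le> K' * (1 + t)\<close> \<open>K' \<ge> 1\<close> \<open>1 \<le> t\<close> by (simp add: mult_left_mono)
    also have "\<dots> = ln (2 * K') + ln t"
      using \<open>K' \<ge> 1\<close> \<open>1 \<le> t\<close> by (simp add: ln_mult)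
    finally show "ereal (ln \<bar>g t\<bar> / t) \<le> ereal (ln (2 * K') / t + ln t / t)"
      using \<open>1 \<le> t\<close> by (simp add: divide_right_mono add_divide_distrib[symmetric])
  qed
  then have "Limsup at_top (\<lambda>t. ereal (ln \<bar>g t\<bar> / t))
      \<le> Limsup at_top (\<lambda>t. ereal (ln (2 * K') / t + ln t / t))"
    by (rule Limsup_mono)
  also have "\<dots> = 0"
  proof (rule lim_imp_Limsup)
    have "((\<lambda>t. ln (2 * K') / t + ln t / t) \<longlongrightarrow> 0 + 0) at_top"
      by (intro tendsto_add tendsto_divide_0[OF tendsto_const] ln_x_over_x_tendsto_0
          filterlim_at_top_imp_at_infinity filterlim_ident)
    then show "((\<lambda>t. ereal (ln (2 * K') / t + ln t / t)) \<longlongrightarrow> 0) at_top"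
      by (simp add: zero_ereal_def tendsto_ereal)
  qed simp
  finally show ?thesis .
qed

lemma Limsup_ln_div_neg_imp_tendsto_0:
  fixes g :: "real \<Rightarrow> real"
  assumes "Limsup at_top (\<lambda>t. ereal (ln \<bar>g t\<bar> / t)) < 0"
  shows "(g \<longlongrightarrow> 0) at_top"
proof -
  obtain r where "Limsup at_top (\<lambda>t. ereal (ln \<bar>g t\<bar> / t)) < ereal r" "r < 0"
    using ereal_dense2[OF assms] by (metis ereal_less(2) less_ereal.simps(1) zero_ereal_def)
  then have "\<forall>\<^sub>F t in at_top. ereal (ln \<bar>g t\<bar> / t) < ereal r"
    by (intro Limsup_lessD)
  then have "\<forall>\<^sub>F t in at_top. norm (g t) \<le> exp (r * t)"
  proof (rule eventually_mono[OF eventually_conj[OF _ eventually_gt_at_top[of 0]]])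
    fix t :: real assume "ereal (ln \<bar>g t\<bar> / t) < ereal r \<and> 0 < t"
    then have "ln \<bar>g t\<bar> < r * t" by (simp add: divide_less_eq)
    then have "exp (ln \<bar>g t\<bar>) < exp (r * t)"
      by simp
    then show "norm (g t) \<le> exp (r * t)"
      by (cases "g t = 0") auto
  qed
  moreover have "((\<lambda>t. exp (r * t)) \<longlongrightarrow> 0) at_top"
    using \<open>r < 0\<close>
    by (intro filterlim_compose[OF exp_at_bot] filterlim_tendsto_neg_mult_at_bot[OF tendsto_const]
        filterlim_ident)
  ultimately show ?thesis
    by (rule Lim_null_comparison)
qed

lemma Limsup_ln_div_eventually_0:
  fixes g :: "real \<Rightarrow> real"
  assumes "\<forall>\<^sub>F t in at_top. g t = 0"
  shows "Limsup at_top (\<lambda>t. ereal (ln \<bar>g t\<bar> / t)) = 0"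
proof (rule lim_imp_Limsup)
  show "((\<lambda>t. ereal (ln \<bar>g t\<bar> / t)) \<longlongrightarrow> 0) at_top"
    using assms by (intro tendsto_eventually) (auto elim: eventually_mono)
qed simp

lemma Limsup_le_comp_growth: "Limsup at_top (\<lambda>t. ereal (ln \<bar>w x y z t\<bar> / t)) \<le> comp_growth w"
  unfolding comp_growth_def by (rule SUP_upper2[of "(x, y, z)"]) auto

lemma comp_growth_le_0:
  assumes "\<And>x y z t. 0 \<le> t \<Longrightarrow> \<bar>w x y z t\<bar> \<le> K * (1 + t)"
  shows "comp_growth w \<le> 0"
  unfolding comp_growth_def using assms by (auto intro!: SUP_least Limsup_ln_div_le_0)

(* Since ln 0 = 0, a component that eventually vanishes has growth rate 0, not -\<infinity>. *)
lemma growth_rate_nonneg: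
  assumes "(\<And>x y z. (vx x y z \<longlongrightarrow> 0) at_top \<and> (vy x y z \<longlongrightarrow> 0) at_top \<and>
                     (vz x y z \<longlongrightarrow> 0) at_top \<and> (p x y z \<longlongrightarrow> 0) at_top)
             \<Longrightarrow> \<forall>\<^sub>F t in at_top. vx 0 0 0 t = 0"
  shows "0 \<le> growth_rate vx vy vz p"
proof (rule ccontr)
  assume "\<not> 0 \<le> growth_rate vx vy vz p"
  then have "comp_growth w < 0" if "w \<in> {vx, vy, vz, p}" for w
    using that by (auto simp: growth_rate_def not_le max_less_iff_conj)
  then have "(w x y z \<longlongrightarrow> 0) at_top" if "w \<in> {vx, vy, vz, p}" for w x y z
    using that by (intro Limsup_ln_div_neg_imp_tendsto_0 le_less_trans[OF Limsup_le_comp_growth]) auto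
  then have "Limsup at_top (\<lambda>t. ereal (ln \<bar>vx 0 0 0 t\<bar> / t)) = 0"
    using assms by (intro Limsup_ln_div_eventually_0) auto
  with Limsup_le_comp_growth[of vx 0 0 0] \<open>\<And>w. w \<in> {vx, vy, vz, p} \<Longrightarrow> comp_growth w < 0\<close>[of vx]
  show False by simp
qed

lemma modal_sum_abs_le:
  assumes "\<And>i \<xi>. i \<in> {1..4} \<Longrightarrow> \<bar>g i \<xi>\<bar> \<le> B i"
  shows "\<bar>modal_sum a k l m g x y z\<bar> \<le> (\<Sum>i\<in>{1..4}. \<bar>a i\<bar> * B i)"
  unfolding modal_sum_def
  by (rule order.trans[OF sum_abs sum_mono]) (simp add: abs_mult assms mult_left_mono)

lemma comp_growth_modal_sum_le_0:
  assumes "\<And>i \<xi> t. i \<in> {1..4} \<Longrightarrow> 0 \<le> t \<Longrightarrow> \<bar>u i \<xi> t\<bar> \<le> K i * (1 + t)"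
    and "\<And>x y z t. 0 \<le> t \<Longrightarrow> w x y z t = modal_sum a k l m (\<lambda>i \<xi>. u i \<xi> t) x y z"
  shows "comp_growth w \<le> 0"
proof (rule comp_growth_le_0)
  fix x y z t :: real assume "0 \<le> t"
  then show "\<bar>w x y z t\<bar> \<le> (\<Sum>i\<in>{1..4}. \<bar>a i\<bar> * K i) * (1 + t)"
    unfolding assms(2)[OF \<open>0 \<le> t\<close>] sum_distrib_right mult.assoc by (intro modal_sum_abs_le assms(1))
qed

lemma growth_rate_Z2_mode_decomposition_le_0:
  assumes "Z2_mode_decomposition c0 rho0 k l m u vx vy vz p"
    and "\<And>i \<xi> t. i \<in> {1..4} \<Longrightarrow> 0 \<le> t \<Longrightarrow> \<bar>u i \<xi> t\<bar> \<le> K i * (1 + t)"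
  shows "growth_rate vx vy vz p \<le> 0"
proof -
  note decomposition = assms(1)[unfolded Z2_mode_decomposition_def, rule_format]
  have "comp_growth vx \<le> 0" "comp_growth vy \<le> 0" "comp_growth vz \<le> 0" "comp_growth p \<le> 0"
    using decomposition by (auto intro!: comp_growth_modal_sum_le_0[OF assms(2)])
  then show ?thesis
    by (simp add: growth_rate_def)
qed

lemma Z2_mode_tendsto_0:
  assumes "\<And>i. i \<in> {1..4} \<Longrightarrow> k i \<noteq> 0" "Delta_Z2 c0 rho0 k l m \<noteq> 0" "i \<in> {1..4}"
    and "\<And>x y z. ((\<lambda>t. modal_sum (Z2_ax k l m) k l m (\<lambda>i \<xi>. u i \<xi> t) x y z) \<longlongrightarrow> 0) F"
      "\<And>x y z. ((\<lambda>t. modal_sum (Z2_ay l) k l m (\<lambda>i \<xi>. u i \<xi> t) x y z) \<longlongrightarrow> 0) F"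
      "\<And>x y z. ((\<lambda>t. modal_sum (Z2_az m) k l m (\<lambda>i \<xi>. u i \<xi> t) x y z) \<longlongrightarrow> 0) F"
      "\<And>x y z. ((\<lambda>t. modal_sum (Z2_ap c0 rho0 k l m) k l m (\<lambda>i \<xi>. u i \<xi> t) x y z) \<longlongrightarrow> 0) F"
  shows "((\<lambda>t. u i \<xi> t) \<longlongrightarrow> 0) F"
proof -
  have "k 3 \<noteq> 0" "k 4 \<noteq> 0" "k i \<noteq> 0"
    using assms(1,3) by auto
  then obtain \<alpha> \<beta> \<gamma> \<delta> where coord: "\<And>g \<xi>. g i \<xi> = \<alpha> * modal_sum (Z2_ax k l m) k l m g (\<xi> / k i) 0 0
       + \<beta> * modal_sum (Z2_ay l) k l m g (\<xi> / k i) 0 0 + \<gamma> * modal_sum (Z2_az m) k l m g (\<xi> / k i) 0 0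
       + \<delta> * modal_sum (Z2_ap c0 rho0 k l m) k l m g (\<xi> / k i) 0 0"
    using modal_sum_coordinate[OF _ _ assms(2,3)] by blast
  have "((\<lambda>t. u i \<xi> t) \<longlongrightarrow> \<alpha> * 0 + \<beta> * 0 + \<gamma> * 0 + \<delta> * 0) F"
    unfolding coord[of "\<lambda>i \<xi>. u i \<xi> _"] by (intro tendsto_intros assms(4-7))
  then show ?thesis by simp
qed

lemma Z2_mode_decomposition_decay:
  assumes "\<And>i. i \<in> {1..4} \<Longrightarrow> k i \<noteq> 0" "Delta_Z2 c0 rho0 k l m \<noteq> 0"
    and decomposition: "Z2_mode_decomposition c0 rho0 k l m u vx vy vz p"
    and vanish: "\<And>i. i \<in> {1..4} \<Longrightarrow> (\<And>\<xi>. ((\<lambda>t. u i \<xi> t) \<longlongrightarrow> 0) at_top) \<Longrightarrow> u i = (\<lambda>_ _. 0)"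
    and decay: "\<And>x y z. (vx x y z \<longlongrightarrow> 0) at_top \<and> (vy x y z \<longlongrightarrow> 0) at_top \<and>
      (vz x y z \<longlongrightarrow> 0) at_top \<and> (p x y z \<longlongrightarrow> 0) at_top"
  shows "\<forall>\<^sub>F t in at_top. vx 0 0 0 t = 0"
proof -
  have modal_decay: "((\<lambda>t. modal_sum a k l m (\<lambda>i \<xi>. u i \<xi> t) x y z) \<longlongrightarrow> 0) at_top"
    if "(w x y z \<longlongrightarrow> 0) at_top" "\<And>t. 0 \<le> t \<Longrightarrow> w x y z t = modal_sum a k l m (\<lambda>i \<xi>. u i \<xi> t) x y z"
    for w a x y z
  proof -
    have "\<forall>\<^sub>F t in at_top. w x y z t = modal_sum a k l m (\<lambda>i \<xi>. u i \<xi> t) x y z"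
      using eventually_ge_at_top[of 0] by (rule eventually_mono) (rule that(2))
    from tendsto_cong[OF this] that(1) show ?thesis
      by simp
  qed
  note rep = decomposition[unfolded Z2_mode_decomposition_def, rule_format]
  have "u i = (\<lambda>_ _. 0)" if "i \<in> {1..4}" for i
  proof (rule vanish[OF that])
    fix \<xi>
    show "((\<lambda>t. u i \<xi> t) \<longlongrightarrow> 0) at_top"
    proof (rule Z2_mode_tendsto_0[OF assms(1,2) that])
      fix x y z
      show "((\<lambda>t. modal_sum (Z2_ax k l m) k l m (\<lambda>i \<xi>. u i \<xi> t) x y z) \<longlongrightarrow> 0) at_top"
        using decay rep by (intro modal_decay[of vx]) simp_all
      show "((\<lambda>t. modal_sum (Z2_ay l) k l m (\<lambda>i \<xi>. u i \<xi> t) x y z) \<longlongrightarrow> 0) at_top"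
        using decay rep by (intro modal_decay[of vy]) simp_all
      show "((\<lambda>t. modal_sum (Z2_az m) k l m (\<lambda>i \<xi>. u i \<xi> t) x y z) \<longlongrightarrow> 0) at_top"
        using decay rep by (intro modal_decay[of vz]) simp_all
      show "((\<lambda>t. modal_sum (Z2_ap c0 rho0 k l m) k l m (\<lambda>i \<xi>. u i \<xi> t) x y z) \<longlongrightarrow> 0) at_top"
        using decay rep by (intro modal_decay[of p]) simp_all
    qed
  qed
  then have "vx 0 0 0 t = 0" if "0 \<le> t" for t
    using rep[OF that] by (simp add: modal_sum_def)
  then show ?thesis
    by (blast intro: eventually_mono[OF eventually_ge_at_top[of 0]])
qed

theorem proposition25:
  fixes U0 c0 rho0 omega_f :: real
    and k l m :: "nat \<Rightarrow> real"
    and F G H P :: "real \<Rightarrow> real \<Rightarrow> real \<Rightarrow> real"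
    and vx vy vz p :: "real \<Rightarrow> real \<Rightarrow> real \<Rightarrow> real \<Rightarrow> real"
  assumes "U0 > 0" and "c0 > 0" and "rho0 > 0"
    and "k 1 * k 2 * k 3 * k 4 \<noteq> 0"
    and "Delta_Z2 c0 rho0 k l m \<noteq> 0"
    and "in_Z2 c0 rho0 k l m F G H P"
    and "is_solution U0 c0 rho0 omega_f F G H P vx vy vz p"
  shows "growth_rate vx vy vz p = 0"
proof -
  have k: "k i \<noteq> 0" if "i \<in> {1..4}" for i
    using that assms(4) by (cases rule: atLeastAtMost_1_4_cases) auto
  show ?thesis
  proof (rule Z2_solution_mode_decomposition[OF assms(2,3) k assms(5-7)])
    fix u K
    assume bound: "\<And>i \<xi> t. i \<in> {1..4} \<Longrightarrow> 0 \<le> t \<Longrightarrow> \<bar>u i \<xi> t\<bar> \<le> K i * (1 + t)"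
      and vanish: "\<And>i. i \<in> {1..4} \<Longrightarrow> (\<And>\<xi>. ((\<lambda>t. u i \<xi> t) \<longlongrightarrow> 0) at_top) \<Longrightarrow> u i = (\<lambda>_ _. 0)"
      and decomposition: "Z2_mode_decomposition c0 rho0 k l m u vx vy vz p"
    have "growth_rate vx vy vz p \<le> 0"
      by (rule growth_rate_Z2_mode_decomposition_le_0[OF decomposition bound])
    moreover have "0 \<le> growth_rate vx vy vz p"
      by (rule growth_rate_nonneg, rule Z2_mode_decomposition_decay[OF k assms(5) decomposition vanish])
    ultimately show ?thesis
      by simp
  qed
qed

end
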